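(* Let $\Gamma$ be a metric graph as described in the context. A function $u\colon\Gamma\to\mathbb{R}$ is convex if and only if $u$ is a viscosity sub-solution of the problem \[ u''=0 \text{ on the edges of }\Gamma,\qquad \min_{\mathrm{e},\bar{\mathrm{e}}\in\mathrm{E}_{\mathrm{v}}}\Big\{\frac{\partial u}{\partial x_{\mathrm{e}}}(\mathrm{v})+\frac{\partial u}{\partial x_{\bar{\mathrm{e}}}}(\mathrm{v})\Big\}=0 \text{ for interior vertices } \mathrm{v},\qquad u(\mathrm{v})=\lim_{x\to\mathrm{v}}u(x)\text{ for terminal vertices }\mathrm{v}. \]
   Context: $\Gamma$ is a metric graph: a finite, connected, simple graph with vertex set $\mathrm{V}$ and edge set $\mathrm{E}$ (bounded degrees $\ge1$), each edge $\mathrm{e}$ identified with an interval $[0,\ell_{\mathrm{e}}]$ via an orientation (initial vertex $\mathrm{e}_-$ at $0$, terminal vertex $\mathrm{e}_+$ at $\ell_{\mathrm{e}}$). $\Gamma$ is a connected compact metric space with path distance $d$, with $d(x,y)=|x-y|$ for points on the same edge; $[x,y]$ is the minimal path between $x$ and $y$. $\mathrm{E}_{\mathrm{v}}$ is the set of edges incident to $\mathrm{v}$; a vertex is interior if its degree exceeds $1$, terminal otherwise. The ingoing derivative at $\mathrm{v}$ along $\mathrm{e}$ is $\frac{\partial u}{\partial x_{\mathrm{e}}}(\mathrm{v})=u_{\mathrm{e}}'(\mathrm{v})$ if $\mathrm{v}=\mathrm{e}_-$ and $-u_{\mathrm{e}}'(\mathrm{v})$ if $\mathrm{v}=\mathrm{e}_+$.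 A function $u$ is convex if $u(z)\le\frac{d(y,z)}{d(x,y)}u(x)+\frac{d(x,z)}{d(x,y)}u(y)$ for all $x,y\in\Gamma$ and $z\in[x,y]$. An upper semicontinuous $u$ is a viscosity sub-solution of the problem if: for every $x_0\in\Gamma\setminus\mathrm{V}$, $\delta>0$ and $\varphi\in C^2(x_0-\delta,x_0+\delta)$ with $\varphi(x_0)=u(x_0)$ and $\varphi\ge u$ on $(x_0-\delta,x_0+\delta)$, one has $\varphi''(x_0)\ge0$; and for every interior vertex $\mathrm{v}$, $\mathrm{e},\bar{\mathrm{e}}\in\mathrm{E}_{\mathrm{v}}$ and $\varphi\in C^1(\mathrm{e}\cup\bar{\mathrm{e}})$ with $\varphi(\mathrm{v})=u(\mathrm{v})$ and $\varphi\ge u$ on $\mathrm{e}\cup\bar{\mathrm{e}}$, one has $\frac{\partial \varphi}{\partial x_{\mathrm{e}}}(\mathrm{v})+\frac{\partial \varphi}{\partial x_{\bar{\mathrm{e}}}}(\mathrm{v})\ge0$. *)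

theory Defs
  imports "HOL-Analysis.Analysis"
begin

text \<open>A metric graph: vertex set, edge set, orientation of every edge
  (initial vertex esrc = e_-, terminal vertex etgt = e_+) and edge lengths.\<close>

record ('v, 'e) mgraph =
  mverts :: "'v set"
  medges :: "'e set"
  esrc :: "'e \<Rightarrow> 'v"
  etgt :: "'e \<Rightarrow> 'v"
  elen :: "'e \<Rightarrow> real"

text \<open>Points of the metric graph: vertices, and interior points of edges
  (edge e, coordinate t with 0 < t < len e).\<close>

datatype ('v, 'e) gpoint = GV 'v | GE 'e real

definition gpoints :: "('v, 'e) mgraph \<Rightarrow> ('v, 'e) gpoint set" where
  "gpoints G = GV ` mverts G \<union>
     {GE e t | e t. e \<in> medges G \<and> 0 < t \<and> t < elen G e}"

definition gpos :: "('v, 'e) mgraph \<Rightarrow> 'e \<Rightarrow> real \<Rightarrow> ('v, 'e) gpoint" where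
  "gpos G e s = (if s = 0 then GV (esrc G e)
                 else if s = elen G e then GV (etgt G e) else GE e s)"

definition inc_edges :: "('v, 'e) mgraph \<Rightarrow> 'v \<Rightarrow> 'e set" where
  "inc_edges G v = {e \<in> medges G. esrc G e = v \<or> etgt G e = v}"

definition adjacent :: "('v, 'e) mgraph \<Rightarrow> 'v \<Rightarrow> 'v \<Rightarrow> bool" where
  "adjacent G a b = (\<exists>e\<in>medges G. {a, b} = {esrc G e, etgt G e})"

inductive walk :: "('v, 'e) mgraph \<Rightarrow> 'v \<Rightarrow> 'v \<Rightarrow> real \<Rightarrow> bool" for G where
  walk_nil: "a \<in> mverts G \<Longrightarrow> walk G a a 0"
| walk_fwd: "e \<in> medges G \<Longrightarrow> walk G (etgt G e) b L \<Longrightarrow> walk G (esrc G e) b (elen G e + L)"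
| walk_bwd: "e \<in> medges G \<Longrightarrow> walk G (esrc G e) b L \<Longrightarrow> walk G (etgt G e) b (elen G e + L)"

definition vdist :: "('v, 'e) mgraph \<Rightarrow> 'v \<Rightarrow> 'v \<Rightarrow> real" where
  "vdist G a b = Inf {L. walk G a b L}"

fun anch :: "('v, 'e) mgraph \<Rightarrow> ('v, 'e) gpoint \<Rightarrow> ('v \<times> real) set" where
  "anch G (GV v) = {(v, 0)}"
| "anch G (GE e t) = {(esrc G e, t), (etgt G e, elen G e - t)}"

text \<open>Path distance on the metric graph: shortest length of a path, either
  inside one closed edge or leaving through edge endpoints.\<close>

definition gdist :: "('v, 'e) mgraph \<Rightarrow> ('v, 'e) gpoint \<Rightarrow> ('v, 'e) gpoint \<Rightarrow> real" where
  "gdist G p q = Inf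
     ({a + vdist G x y + b | x a y b. (x, a) \<in> anch G p \<and> (y, b) \<in> anch G q}
      \<union> {\<bar>s - t\<bar> | e s t. e \<in> medges G \<and> s \<in> {0..elen G e} \<and> t \<in> {0..elen G e}
            \<and> p = gpos G e s \<and> q = gpos G e t})"

definition metric_graph :: "('v, 'e) mgraph \<Rightarrow> bool" where
  "metric_graph G \<longleftrightarrow>
     finite (mverts G) \<and> finite (medges G) \<and> mverts G \<noteq> {} \<and>
     (\<forall>e\<in>medges G. esrc G e \<in> mverts G \<and> etgt G e \<in> mverts G
                    \<and> esrc G e \<noteq> etgt G e \<and> 0 < elen G e) \<and>
     \<comment> \<open>simple: no multiple edges\<close>
     (\<forall>e1\<in>medges G. \<forall>e2\<in>medges G.
        {esrc G e1, etgt G e1} = {esrc G e2, etgt G e2} \<longrightarrow> e1 = e2) \<and>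
     \<comment> \<open>every vertex has degree at least 1\<close>
     (\<forall>v\<in>mverts G. inc_edges G v \<noteq> {}) \<and>
     \<comment> \<open>connected\<close>
     (\<forall>a\<in>mverts G. \<forall>b\<in>mverts G. (adjacent G)\<^sup>*\<^sup>* a b) \<and>
     \<comment> \<open>d(x,y) = |x - y| for points on the same edge\<close>
     (\<forall>e\<in>medges G. \<forall>s\<in>{0..elen G e}. \<forall>t\<in>{0..elen G e}.
        gdist G (gpos G e s) (gpos G e t) = \<bar>s - t\<bar>)"

text \<open>z \<in> [x,y] (z lies on a minimal path from x to y) iff d(x,z) + d(z,y) = d(x,y).\<close>

definition on_min_path :: "('v, 'e) mgraph \<Rightarrow> ('v, 'e) gpoint \<Rightarrow> ('v, 'e) gpoint \<Rightarrow> ('v, 'e) gpoint \<Rightarrow> bool" where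
  "on_min_path G x y z \<longleftrightarrow> gdist G x z + gdist G z y = gdist G x y"

definition mg_convex :: "('v, 'e) mgraph \<Rightarrow> (('v, 'e) gpoint \<Rightarrow> real) \<Rightarrow> bool" where
  "mg_convex G u \<longleftrightarrow>
     (\<forall>x\<in>gpoints G. \<forall>y\<in>gpoints G. \<forall>z\<in>gpoints G. x \<noteq> y \<and> on_min_path G x y z \<longrightarrow>
        u z \<le> gdist G y z / gdist G x y * u x + gdist G x z / gdist G x y * u y)"

definition mg_usc :: "('v, 'e) mgraph \<Rightarrow> (('v, 'e) gpoint \<Rightarrow> real) \<Rightarrow> bool" where
  "mg_usc G u \<longleftrightarrow>
     (\<forall>x\<in>gpoints G. \<forall>\<epsilon>>0. \<exists>\<delta>>0. \<forall>y\<in>gpoints G. gdist G x y < \<delta> \<longrightarrow> u y < u x + \<epsilon>)"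

definition C2_on :: "real set \<Rightarrow> (real \<Rightarrow> real) \<Rightarrow> (real \<Rightarrow> real) \<Rightarrow> (real \<Rightarrow> real) \<Rightarrow> bool" where
  "C2_on I f f' f'' \<longleftrightarrow>
     (\<forall>s\<in>I. (f has_real_derivative f' s) (at s) \<and> (f' has_real_derivative f'' s) (at s))
     \<and> continuous_on I f''"

definition C1_closed :: "real \<Rightarrow> (real \<Rightarrow> real) \<Rightarrow> (real \<Rightarrow> real) \<Rightarrow> bool" where
  "C1_closed l f f' \<longleftrightarrow>
     (\<forall>s\<in>{0..l}. (f has_real_derivative f' s) (at s within {0..l})) \<and> continuous_on {0..l} f'"

definition ingoing :: "('v, 'e) mgraph \<Rightarrow> 'e \<Rightarrow> 'v \<Rightarrow> (real \<Rightarrow> real) \<Rightarrow> real" where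
  "ingoing G e v f' = (if v = esrc G e then f' 0 else - f' (elen G e))"

definition viscosity_subsolution :: "('v, 'e) mgraph \<Rightarrow> (('v, 'e) gpoint \<Rightarrow> real) \<Rightarrow> bool" where
  "viscosity_subsolution G u \<longleftrightarrow>
     mg_usc G u \<and>
     \<comment> \<open>edge condition: u'' \<ge> 0 in the viscosity sense at interior points of edges\<close>
     (\<forall>e\<in>medges G. \<forall>t. 0 < t \<and> t < elen G e \<longrightarrow>
        (\<forall>\<delta>>0. \<forall>\<phi> \<phi>' \<phi>''. C2_on {t - \<delta> <..< t + \<delta>} \<phi> \<phi>' \<phi>'' \<and> \<phi> t = u (GE e t) \<and>
           (\<forall>s. \<bar>s - t\<bar> < \<delta> \<and> 0 < s \<and> s < elen G e \<longrightarrow> u (GE e s) \<le> \<phi> s)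
           \<longrightarrow> \<phi>'' t \<ge> 0)) \<and>
     \<comment> \<open>vertex condition at interior vertices, for two distinct incident edges\<close>
     (\<forall>v\<in>mverts G. card (inc_edges G v) > 1 \<longrightarrow>
        (\<forall>e\<in>inc_edges G v. \<forall>e'\<in>inc_edges G v. e \<noteq> e' \<longrightarrow>
          (\<forall>\<phi> \<phi>e' \<phi>f'.
             C1_closed (elen G e) (\<lambda>s. \<phi> (gpos G e s)) \<phi>e' \<and>
             C1_closed (elen G e') (\<lambda>s. \<phi> (gpos G e' s)) \<phi>f' \<and>
             \<phi> (GV v) = u (GV v) \<and>
             (\<forall>s\<in>{0..elen G e}. u (gpos G e s) \<le> \<phi> (gpos G e s)) \<and>
             (\<forall>s\<in>{0..elen G e'}. u (gpos G e' s) \<le> \<phi> (gpos G e' s))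
             \<longrightarrow> ingoing G e v \<phi>e' + ingoing G e' v \<phi>f' \<ge> 0)))"

end

theory Submission
  imports Defs
begin

(* Convexity on a metric graph is convexity along geodesics.  A convex u is a sub-solution
for local reasons: on an edge, 2 u(t) <= u(t + h) + u(t - h) forces phi'' >= 0 for every C^2
function touching u from above; at an interior vertex v, the points at distance d from v on
two incident edges have v as the midpoint of a geodesic joining them, so the chord inequality
divided by d gives the vertex inequality as d -> 0.

Conversely, parametrise a geodesic from x through z to y by arc length.  If u exceeded its
chord, the maximum of u minus the chord, minus a small concave parabola, plus a small multiple
of the distance to the finitely many junction times would be a point where u is touched from
above either by a strictly concave parabola inside an edge, which the edge condition forbids,
or by a function with a downward kink at a junction.  At a vertex the kink is ruled out by the
vertex condition, tested with functions quadratic in the distance to the vertex and large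
enough to dominate u on both edges; inside an edge the kink lies below a strictly concave
parabola, which the edge condition rules out. *)

section \<open>Upper semicontinuity and a comparison principle on an interval\<close>

definition usc_on :: "'a::metric_space set \<Rightarrow> ('a \<Rightarrow> real) \<Rightarrow> bool" where
  "usc_on S H \<longleftrightarrow> (\<forall>x\<in>S. \<forall>\<epsilon>>0. \<exists>\<delta>>0. \<forall>y\<in>S. dist y x < \<delta> \<longrightarrow> H y < H x + \<epsilon>)"

lemma usc_onD:
  assumes "usc_on S H" "x \<in> S" "\<epsilon> > 0"
  obtains \<delta> where "\<delta> > 0" "\<And>y. y \<in> S \<Longrightarrow> dist y x < \<delta> \<Longrightarrow> H y < H x + \<epsilon>"
  using assms unfolding usc_on_def by blast

(* Were there no maximum, every point would have a neighbourhood on which H stays below a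
   value exceeded elsewhere; the largest of these values over a finite subcover would then be
   exceeded inside the cover. *)
lemma usc_on_attains_max:
  assumes "compact S" "S \<noteq> {}" and usc: "usc_on S H"
  shows "\<exists>m\<in>S. \<forall>x\<in>S. H x \<le> H m"
proof (rule ccontr)
  assume "\<not> ?thesis"
  then obtain y where y: "\<And>x. x \<in> S \<Longrightarrow> y x \<in> S \<and> H x < H (y x)"
    by (metis not_le)
  define c where "c x = (H x + H (y x)) / 2" for x
  have "\<exists>\<delta>>0. \<forall>z\<in>S. dist z x < \<delta> \<longrightarrow> H z < c x" if x: "x \<in> S" for x
  proof -
    have "c x - H x > 0" using y[OF x] unfolding c_def by simp
    then obtain d where "d > 0" "\<And>z. z \<in> S \<Longrightarrow> dist z x < d \<Longrightarrow> H z < H x + (c x - H x)"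
      using usc_onD[OF usc x] by blast
    then show ?thesis by auto
  qed
  then obtain \<delta> where \<delta>: "\<And>x. x \<in> S \<Longrightarrow> \<delta> x > 0 \<and> (\<forall>z\<in>S. dist z x < \<delta> x \<longrightarrow> H z < c x)"
    by metis
  have "S \<subseteq> (\<Union>x\<in>S. ball x (\<delta> x))"
    using \<delta> by force
  then obtain C where C: "C \<subseteq> S" "finite C" "S \<subseteq> (\<Union>x\<in>C. ball x (\<delta> x))"
    using compactE_image[OF \<open>compact S\<close>, of S "\<lambda>x. ball x (\<delta> x)"] by blast
  then have "c ` C \<noteq> {}" using \<open>S \<noteq> {}\<close> by blast
  then have "Max (c ` C) \<in> c ` C" using C(2) by simp
  then obtain k where k: "k \<in> C" "c k = Max (c ` C)" by (metis imageE)
  obtain x where x: "x \<in> C" "y k \<in> ball x (\<delta> x)"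
    using C k y by blast
  then have "H (y k) < c x"
    using \<delta> C(1) y k(1) by (auto simp: dist_commute)
  also have "\<dots> \<le> c k" using k x \<open>finite C\<close> by simp
  also have "\<dots> < H (y k)" using y C(1) k(1) unfolding c_def by force
  finally show False ..
qed

lemma usc_on_add_continuous:
  assumes usc: "usc_on S F" and cont: "continuous_on S R"
  shows "usc_on S (\<lambda>x. F x + R x)"
  unfolding usc_on_def
proof (intro ballI allI impI)
  fix x and \<epsilon> :: real assume x: "x \<in> S" and \<epsilon>: "\<epsilon> > 0"
  obtain d1 where d1: "d1 > 0" "\<And>y. y \<in> S \<Longrightarrow> dist y x < d1 \<Longrightarrow> F y < F x + \<epsilon> / 2"
    using usc_onD[OF usc x, of "\<epsilon> / 2"] \<epsilon> by auto
  obtain d2 where d2: "d2 > 0" "\<forall>y\<in>S. dist y x < d2 \<longrightarrow> dist (R y) (R x) < \<epsilon> / 2"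
    using cont x \<epsilon> unfolding continuous_on_iff by (meson half_gt_zero)
  have "F y + R y < F x + R x + \<epsilon>" if "y \<in> S" "dist y x < min d1 d2" for y
  proof -
    have "\<bar>R y - R x\<bar> < \<epsilon> / 2" using d2(2) that by (simp add: dist_real_def)
    then show ?thesis using d1(2)[of y] that by linarith
  qed
  then show "\<exists>\<delta>>0. \<forall>y\<in>S. dist y x < \<delta> \<longrightarrow> F y + R y < F x + R x + \<epsilon>"
    using d1(1) d2(1) by (metis min_less_iff_conj)
qed

lemma sum_abs_affine_near:
  fixes T :: "real set"
  assumes "finite T" "m \<notin> T"
  shows "\<exists>r>0. \<exists>\<alpha> \<beta>. \<forall>s. \<bar>s - m\<bar> < r \<longrightarrow> (\<Sum>\<tau>\<in>T. \<bar>s - \<tau>\<bar>) = \<alpha> + \<beta> * s"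
  using assms
proof (induction T rule: finite_induct)
  case empty
  have "\<forall>s. \<bar>s - m\<bar> < 1 \<longrightarrow> (\<Sum>\<tau>\<in>{}. \<bar>s - \<tau>\<bar>) = 0 + 0 * s" by simp
  then show ?case using zero_less_one by blast
next
  case (insert t T)
  then obtain r \<alpha> \<beta> where r: "r > 0" "\<forall>s. \<bar>s - m\<bar> < r \<longrightarrow> (\<Sum>\<tau>\<in>T. \<bar>s - \<tau>\<bar>) = \<alpha> + \<beta> * s"
    by auto
  have "t \<noteq> m" using insert by auto
  have "(\<Sum>\<tau>\<in>insert t T. \<bar>s - \<tau>\<bar>) = (\<alpha> - sgn (m - t) * t) + (\<beta> + sgn (m - t)) * s"
    if "\<bar>s - m\<bar> < min r \<bar>t - m\<bar>" for s
  proof -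
    have "\<bar>s - t\<bar> = sgn (m - t) * (s - t)"
      using that \<open>t \<noteq> m\<close> by (cases "m < t") (auto simp: abs_if sgn_if)
    then show ?thesis using insert r that by (simp add: algebra_simps)
  qed
  moreover have "min r \<bar>t - m\<bar> > 0" using r \<open>t \<noteq> m\<close> by simp
  ultimately show ?case by blast
qed

definition touches_above :: "(real \<Rightarrow> real) \<Rightarrow> real set \<Rightarrow> real \<Rightarrow> (real \<Rightarrow> real) \<Rightarrow> bool" where
  "touches_above F S m g \<longleftrightarrow> F m = g m \<and> (\<exists>r>0. \<forall>s\<in>S. \<bar>s - m\<bar> < r \<longrightarrow> F s \<le> g s)"

lemma touches_above_le_near:
  assumes "touches_above F S m g" "r > 0" "\<And>s. \<bar>s - m\<bar> < r \<Longrightarrow> g s \<le> h s" "h m = g m"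
  shows "touches_above F S m h"
proof -
  obtain r' where "r' > 0" "\<forall>s\<in>S. \<bar>s - m\<bar> < r' \<longrightarrow> F s \<le> g s" "F m = g m"
    using assms(1) unfolding touches_above_def by blast
  then show ?thesis
    unfolding touches_above_def using assms(2-4)
    by (intro conjI exI[of _ "min r r'"]) (auto intro: order_trans simp del: abs_diff_less_iff)
qed

context
  fixes F :: "real \<Rightarrow> real" and D :: real and T :: "real set"
  assumes T: "finite T"
    and smooth: "\<And>m a b c. m \<in> {0<..<D} - T \<Longrightarrow>
      touches_above F {0..D} m (\<lambda>s. a + b * s + c * s\<^sup>2) \<Longrightarrow> c \<ge> 0"
    and kink: "\<And>m \<eta> a b c. m \<in> T \<Longrightarrow> \<eta> > 0 \<Longrightarrow>
      \<not> touches_above F {0..D} m (\<lambda>s. a + b * s + c * s\<^sup>2 - \<eta> * \<bar>s - m\<bar>)"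
begin

lemma touches_above_minus_sum_abs:
  assumes m: "m \<in> {0<..<D}" and \<eta>: "\<eta> > 0"
    and touch: "touches_above F {0..D} m (\<lambda>s. a + b * s + c * s\<^sup>2 - \<eta> * (\<Sum>\<tau>\<in>T. \<bar>s - \<tau>\<bar>))"
  shows "c \<ge> 0"
proof (cases "m \<in> T")
  case False
  obtain r \<alpha> \<beta> where r: "r > 0" "\<And>s. \<bar>s - m\<bar> < r \<Longrightarrow> (\<Sum>\<tau>\<in>T. \<bar>s - \<tau>\<bar>) = \<alpha> + \<beta> * s"
    using sum_abs_affine_near[OF T False] by blast
  have "touches_above F {0..D} m (\<lambda>s. (a - \<eta> * \<alpha>) + (b - \<eta> * \<beta>) * s + c * s\<^sup>2)"
    by (rule touches_above_le_near[OF touch r(1)]) (simp_all add: r algebra_simps)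
  then show ?thesis using smooth m False by blast
next
  case True
  obtain r \<alpha> \<beta> where r: "r > 0" "\<And>s. \<bar>s - m\<bar> < r \<Longrightarrow> (\<Sum>\<tau>\<in>T - {m}. \<bar>s - \<tau>\<bar>) = \<alpha> + \<beta> * s"
    using sum_abs_affine_near[of "T - {m}" m] T by blast
  have "(\<Sum>\<tau>\<in>T. \<bar>s - \<tau>\<bar>) = \<bar>s - m\<bar> + (\<Sum>\<tau>\<in>T - {m}. \<bar>s - \<tau>\<bar>)" for s
    using True T by (simp add: sum.remove)
  then have "touches_above F {0..D} m (\<lambda>s. (a - \<eta> * \<alpha>) + (b - \<eta> * \<beta>) * s + c * s\<^sup>2 - \<eta> * \<bar>s - m\<bar>)"
    by (intro touches_above_le_near[OF touch r(1)]) (simp_all add: r algebra_simps)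
  then show ?thesis using kink[OF True \<eta>] by blast
qed

lemma le_chord_of_touching_tests:
  assumes D: "D > 0" and usc: "usc_on {0..D} F" and s: "s \<in> {0..D}"
  shows "F s \<le> ((D - s) * F 0 + s * F D) / D"
proof (rule ccontr)
  assume above: "\<not> ?thesis"
  define L where "L x = F 0 + (F D - F 0) * x / D" for x
  define w where "w x = (\<Sum>\<tau>\<in>T. \<bar>x - \<tau>\<bar>)" for x
  define g0 where "g0 = F s - L s"
  have "L s = ((D - s) * F 0 + s * F D) / D" unfolding L_def using D by (simp add: field_simps)
  then have g0: "g0 > 0" using above unfolding g0_def by simp
  have w: "w x \<ge> 0" for x unfolding w_def by (simp add: sum_nonneg)
  define \<epsilon> where "\<epsilon> = g0 / (2 * D\<^sup>2 + 2)"
  define \<eta> where "\<eta> = g0 / (2 * (w 0 + w D + 1))"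
  have "0 < 2 * D\<^sup>2 + 2" using zero_le_power2[of D] by linarith
  then have \<epsilon>: "\<epsilon> > 0" "\<epsilon> * D\<^sup>2 < g0 / 2"
    using g0 unfolding \<epsilon>_def by (simp_all add: field_simps)
  have \<eta>: "\<eta> > 0" "\<eta> * w 0 < g0 / 2" "\<eta> * w D < g0 / 2"
    using g0 w[of 0] w[of D] unfolding \<eta>_def by (simp_all add: field_simps add_pos_nonneg)
  define H where "H x = F x + (\<eta> * w x - L x - \<epsilon> * x * (D - x))" for x
  have "usc_on {0..D} H"
    unfolding H_def w_def L_def using D by (intro usc_on_add_continuous[OF usc] continuous_intros) auto
  then obtain m where m: "m \<in> {0..D}" "\<And>x. x \<in> {0..D} \<Longrightarrow> H x \<le> H m"
    using usc_on_attains_max[of "{0..D}" H] D by force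
  have "s * (D - s) \<le> D * D" using s by (intro mult_mono) auto
  then have "\<epsilon> * (s * (D - s)) \<le> \<epsilon> * D\<^sup>2" using \<epsilon>(1) by (simp add: power2_eq_square)
  moreover have "H s = g0 + \<eta> * w s - \<epsilon> * (s * (D - s))" unfolding H_def g0_def by simp
  moreover have "\<eta> * w s \<ge> 0" using \<eta>(1) w[of s] by simp
  ultimately have "g0 / 2 < H s" using \<epsilon>(2) by linarith
  moreover have "H 0 < g0 / 2" "H D < g0 / 2" using \<eta> D unfolding H_def L_def by simp_all
  moreover have "H s \<le> H m" using m(2) s by blast
  ultimately have "m \<noteq> 0" "m \<noteq> D" by auto
  then have "m \<in> {0<..<D}" using m(1) by auto
  moreover have "touches_above F {0..D} m (\<lambda>x. (F 0 + H m) + ((F D - F 0) / D + \<epsilon> * D) * x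
      + (- \<epsilon>) * x\<^sup>2 - \<eta> * (\<Sum>\<tau>\<in>T. \<bar>x - \<tau>\<bar>))"
    unfolding touches_above_def
  proof (intro conjI exI[of _ 1] ballI impI)
    show "F m = (F 0 + H m) + ((F D - F 0) / D + \<epsilon> * D) * m + (- \<epsilon>) * m\<^sup>2 - \<eta> * (\<Sum>\<tau>\<in>T. \<bar>m - \<tau>\<bar>)"
      unfolding H_def L_def w_def using D by (simp add: field_simps power2_eq_square)
    fix x assume "x \<in> {0..D}"
    then have "H x \<le> H m" by (rule m(2))
    then show "F x \<le> (F 0 + H m) + ((F D - F 0) / D + \<epsilon> * D) * x + (- \<epsilon>) * x\<^sup>2 - \<eta> * (\<Sum>\<tau>\<in>T. \<bar>x - \<tau>\<bar>)"
      unfolding H_def L_def w_def using D by (simp add: field_simps power2_eq_square)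
  qed simp
  ultimately have "- \<epsilon> \<ge> 0" using touches_above_minus_sum_abs[OF _ \<eta>(1)] by blast
  then show False using \<epsilon>(1) by simp
qed

end

lemma below_chord_near_end:
  fixes f :: "real \<Rightarrow> real"
  assumes "p \<noteq> q" "\<epsilon> > 0"
    and chord: "\<And>t. t \<in> open_segment p q \<Longrightarrow> f t \<le> (\<bar>q - t\<bar> * f p + \<bar>t - p\<bar> * f q) / \<bar>q - p\<bar>"
  shows "\<exists>\<delta>>0. \<forall>t\<in>open_segment p q. \<bar>t - p\<bar> < \<delta> \<longrightarrow> f t < f p + \<epsilon>"
proof -
  define c where "c t = (\<bar>q - t\<bar> * f p + \<bar>t - p\<bar> * f q) / \<bar>q - p\<bar>" for t
  have "isCont c p" unfolding c_def by (intro continuous_intros) (use \<open>p \<noteq> q\<close> in auto)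
  moreover have "c p = f p" unfolding c_def using \<open>p \<noteq> q\<close> by simp
  ultimately obtain \<delta> where "\<delta> > 0" "\<forall>t. dist t p < \<delta> \<longrightarrow> dist (c t) (f p) < \<epsilon>"
    using \<open>\<epsilon> > 0\<close> unfolding continuous_at_eps_delta by metis
  moreover have "f t < f p + \<epsilon>" if "t \<in> open_segment p q" "\<bar>t - p\<bar> < \<delta>" "\<forall>t. dist t p < \<delta> \<longrightarrow> dist (c t) (f p) < \<epsilon>" for t
  proof -
    have "c t < f p + \<epsilon>" using that(2,3) by (auto simp: dist_real_def)
    then show ?thesis using chord[OF that(1)] unfolding c_def by linarith
  qed
  ultimately show ?thesis by blast
qed

lemma usc_on_Icc_of_chord:
  fixes f :: "real \<Rightarrow> real"
  assumes chord: "\<And>a r b. 0 \<le> a \<Longrightarrow> a < r \<Longrightarrow> r < b \<Longrightarrow> b \<le> l \<Longrightarrow>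
      f r \<le> ((b - r) * f a + (r - a) * f b) / (b - a)"
  shows "usc_on {0..l} f"
  unfolding usc_on_def
proof (intro ballI allI impI)
  fix s and \<epsilon> :: real assume s: "s \<in> {0..l}" and \<epsilon>: "\<epsilon> > 0"
  have right: "\<exists>\<delta>>0. \<forall>t\<in>{s<..l}. t - s < \<delta> \<longrightarrow> f t < f s + \<epsilon>"
  proof (cases "s < l")
    case True
    then obtain \<delta> where "\<delta> > 0" "\<forall>t\<in>{s<..<l}. \<bar>t - s\<bar> < \<delta> \<longrightarrow> f t < f s + \<epsilon>"
      using below_chord_near_end[of s l \<epsilon> f] \<epsilon> chord s by (auto simp: open_segment_eq_real_ivl)
    then show ?thesis by (intro exI[of _ "min \<delta> (l - s)"]) (use True in auto)
  qed (auto intro!: exI[of _ 1])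
  have left: "\<exists>\<delta>>0. \<forall>t\<in>{0..<s}. s - t < \<delta> \<longrightarrow> f t < f s + \<epsilon>"
  proof (cases "0 < s")
    case True
    have "f t \<le> (\<bar>0 - t\<bar> * f s + \<bar>t - s\<bar> * f 0) / \<bar>0 - s\<bar>" if "0 < t" "t < s" for t
      using chord[of 0 t s] that s by (simp add: algebra_simps)
    then obtain \<delta> where "\<delta> > 0" "\<forall>t\<in>{0<..<s}. \<bar>t - s\<bar> < \<delta> \<longrightarrow> f t < f s + \<epsilon>"
      using below_chord_near_end[of s 0 \<epsilon> f] \<epsilon> True by (auto simp: open_segment_eq_real_ivl)
    then show ?thesis by (intro exI[of _ "min \<delta> s"]) (use True in auto)
  qed (auto intro!: exI[of _ 1])
  obtain \<delta>R \<delta>L where "\<delta>R > 0" "\<delta>L > 0" "\<forall>t\<in>{s<..l}. t - s < \<delta>R \<longrightarrow> f t < f s + \<epsilon>"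
    "\<forall>t\<in>{0..<s}. s - t < \<delta>L \<longrightarrow> f t < f s + \<epsilon>"
    using left right by blast
  then show "\<exists>\<delta>>0. \<forall>t\<in>{0..l}. dist t s < \<delta> \<longrightarrow> f t < f s + \<epsilon>"
  proof (intro exI[of _ "min \<delta>R \<delta>L"] conjI ballI impI)
    fix t assume t: "t \<in> {0..l}" "dist t s < min \<delta>R \<delta>L"
    consider "t = s" | "s < t" | "t < s" by linarith
    then show "f t < f s + \<epsilon>"
      by cases (use \<epsilon> t \<open>\<forall>t\<in>{s<..l}. _\<close> \<open>\<forall>t\<in>{0..<s}. _\<close> in \<open>auto simp: dist_real_def\<close>)
  qed (use \<open>\<delta>R > 0\<close> \<open>\<delta>L > 0\<close> in simp)
qed

lemma difference_quotient_at_start: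
  fixes F :: "real \<Rightarrow> real"
  assumes l: "l > 0" and d: "(F has_real_derivative D) (at 0 within {0..l})"
  shows "((\<lambda>h. (F h - F 0) / h) \<longlongrightarrow> D) (at_right 0)"
proof -
  have "((\<lambda>y. (F y - F 0) / (y - 0)) \<longlongrightarrow> D) (at 0 within {0..l})"
    using d unfolding has_field_derivative_iff .
  then show ?thesis using at_within_Icc_at_right[OF l] by simp
qed

lemma difference_quotient_at_end:
  fixes F :: "real \<Rightarrow> real"
  assumes l: "l > 0" and d: "(F has_real_derivative D) (at l within {0..l})"
  shows "((\<lambda>h. (F (l - h) - F l) / h) \<longlongrightarrow> - D) (at_right 0)"
proof -
  have "((\<lambda>y. (F y - F l) / (y - l)) \<longlongrightarrow> D) (at l within {0..l})"
    using d unfolding has_field_derivative_iff .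
  then have 1: "((\<lambda>y. (F y - F l) / (y - l)) \<longlongrightarrow> D) (at_left l)"
    using at_within_Icc_at_left[OF l] by simp
  have "at_left l = filtermap (\<lambda>h. l - h) (at_right 0)"
    unfolding at_left_minus[of l] at_right_to_0[of "- l"] filtermap_filtermap by (simp add: algebra_simps)
  then have "((\<lambda>h. (F (l - h) - F l) / ((l - h) - l)) \<longlongrightarrow> D) (at_right 0)"
    using 1 unfolding filterlim_def[symmetric] by (simp add: filterlim_filtermap)
  then have "((\<lambda>h. - ((F (l - h) - F l) / ((l - h) - l))) \<longlongrightarrow> - D) (at_right 0)"
    by (rule tendsto_minus)
  then show ?thesis by simp
qed

lemma deriv2_nonneg_of_midpoint_convex:
  fixes \<phi> \<phi>' :: "real \<Rightarrow> real"
  assumes \<delta>: "\<delta> > 0"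
    and d1: "\<And>x. \<bar>x - t\<bar> < \<delta> \<Longrightarrow> (\<phi> has_real_derivative \<phi>' x) (at x)"
    and d2: "(\<phi>' has_real_derivative c) (at t)"
    and h0: "h0 > 0" and mid: "\<And>h. 0 < h \<Longrightarrow> h < h0 \<Longrightarrow> 2 * \<phi> t \<le> \<phi> (t + h) + \<phi> (t - h)"
  shows "c \<ge> 0"
proof (rule ccontr)
  assume "\<not> c \<ge> 0"
  then have c: "c < 0" by simp
  obtain d1' where d1': "d1' > 0" "\<forall>h>0. h < d1' \<longrightarrow> \<phi>' t > \<phi>' (t + h)"
    using DERIV_neg_dec_right[OF d2 c] by blast
  obtain d2' where d2': "d2' > 0" "\<forall>h>0. h < d2' \<longrightarrow> \<phi>' t < \<phi>' (t - h)"
    using DERIV_neg_dec_left[OF d2 c] by blast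
  define h where "h = min (min d1' d2') (min \<delta> h0) / 2"
  have h: "0 < h" "h < d1'" "h < d2'" "h < \<delta>" "h < h0" unfolding h_def using d1' d2' \<delta> h0 by auto
  define g where "g k = \<phi> (t + k) + \<phi> (t - k) - 2 * \<phi> t" for k
  have gd: "(g has_real_derivative (\<phi>' (t + k) - \<phi>' (t - k))) (at k)" if "\<bar>k\<bar> < \<delta>" for k
  proof -
    have a: "(\<phi> has_real_derivative \<phi>' (t + k)) (at (t + k))" using d1 that by simp
    have b: "(\<phi> has_real_derivative \<phi>' (t - k)) (at (t - k))" using d1 that by simp
    have "((\<lambda>k. \<phi> (t + k)) has_real_derivative \<phi>' (t + k) * 1) (at k)"
      by (rule DERIV_chain2[where f=\<phi> and g="\<lambda>k. t + k"]) (use a in \<open>auto intro!: derivative_eq_intros\<close>)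
    moreover have "((\<lambda>k. \<phi> (t - k)) has_real_derivative \<phi>' (t - k) * (- 1)) (at k)"
      by (rule DERIV_chain2[where f=\<phi> and g="\<lambda>k. t - k"]) (use b in \<open>auto intro!: derivative_eq_intros\<close>)
    ultimately show ?thesis unfolding g_def by (auto intro!: derivative_eq_intros)
  qed
  have "g 0 > g h"
  proof (rule DERIV_neg_imp_decreasing_open[OF h(1)])
    fix k assume k: "0 < k" "k < h"
    have "\<phi>' (t + k) < \<phi>' t" "\<phi>' t < \<phi>' (t - k)" using d1' d2' k h by auto
    then show "\<exists>y. (g has_real_derivative y) (at k) \<and> y < 0" using gd[of k] k h by (intro exI) auto
  next
    have "\<forall>k\<in>{0..h}. isCont g k"
    proof
      fix k assume "k \<in> {0..h}"
      then have "\<bar>k\<bar> < \<delta>" using h by auto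
      then show "isCont g k" using DERIV_isCont[OF gd] by blast
    qed
    then show "continuous_on {0..h} g" by (rule continuous_at_imp_continuous_on)
  qed
  moreover have "g 0 = 0" unfolding g_def by simp
  moreover have "g h \<ge> 0" using mid[OF h(1) h(5)] unfolding g_def by simp
  ultimately show False by simp
qed

section \<open>The path metric of a metric graph\<close>

(* The coordinate on e of the point at distance d from its endpoint v.  Being an involution of
   [0, elen G e], it also turns a coordinate into the distance from v. *)
definition coord_from :: "('v, 'e) mgraph \<Rightarrow> 'e \<Rightarrow> 'v \<Rightarrow> real \<Rightarrow> real" where
  "coord_from G e v d = (if v = esrc G e then d else elen G e - d)"

locale metric_graph_space =
  fixes G :: "('v, 'e) mgraph"
  assumes metric_graph: "metric_graph G"
begin

lemma finite_edges: "finite (medges G)"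
  using metric_graph unfolding metric_graph_def by auto

lemma src_in_verts: "e \<in> medges G \<Longrightarrow> esrc G e \<in> mverts G"
  and tgt_in_verts: "e \<in> medges G \<Longrightarrow> etgt G e \<in> mverts G"
  and src_ne_tgt: "e \<in> medges G \<Longrightarrow> esrc G e \<noteq> etgt G e"
  and elen_pos: "e \<in> medges G \<Longrightarrow> elen G e > 0"
  using metric_graph unfolding metric_graph_def by auto

lemma edge_eq_if_same_ends:
  "e1 \<in> medges G \<Longrightarrow> e2 \<in> medges G \<Longrightarrow> {esrc G e1, etgt G e1} = {esrc G e2, etgt G e2} \<Longrightarrow> e1 = e2"
  using metric_graph unfolding metric_graph_def by blast

lemma inc_edges_nonempty: "v \<in> mverts G \<Longrightarrow> inc_edges G v \<noteq> {}"
  using metric_graph unfolding metric_graph_def by auto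

lemma verts_connected: "a \<in> mverts G \<Longrightarrow> b \<in> mverts G \<Longrightarrow> (adjacent G)\<^sup>*\<^sup>* a b"
  using metric_graph unfolding metric_graph_def by auto

lemma gdist_on_edge:
  "e \<in> medges G \<Longrightarrow> s \<in> {0..elen G e} \<Longrightarrow> t \<in> {0..elen G e} \<Longrightarrow>
    gdist G (gpos G e s) (gpos G e t) = \<bar>s - t\<bar>"
  using metric_graph unfolding metric_graph_def by auto

definition min_edge_len :: real where
  "min_edge_len = Min (elen G ` medges G)"

lemma min_edge_len_pos: "min_edge_len > 0"
proof -
  have "medges G \<noteq> {}"
    using metric_graph inc_edges_nonempty unfolding metric_graph_def inc_edges_def by blast
  then show ?thesis unfolding min_edge_len_def using finite_edges elen_pos by (subst Min_gr_iff) auto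
qed

lemma min_edge_len_le: "e \<in> medges G \<Longrightarrow> min_edge_len \<le> elen G e"
  unfolding min_edge_len_def using finite_edges by (intro Min_le) auto

lemma walk_verts: "walk G a b L \<Longrightarrow> a \<in> mverts G \<and> b \<in> mverts G"
  by (induction rule: walk.induct) (auto simp: src_in_verts tgt_in_verts)

lemma walk_nonneg: "walk G a b L \<Longrightarrow> L \<ge> 0"
  by (induction rule: walk.induct) (auto simp: elen_pos add_pos_nonneg less_imp_le)

lemma walk_append: "walk G a b L1 \<Longrightarrow> walk G b c L2 \<Longrightarrow> walk G a c (L1 + L2)"
proof (induction arbitrary: L2 rule: walk.induct)
  case (walk_nil a)
  then show ?case by simp
next
  case (walk_fwd e b L)
  then show ?case using walk.walk_fwd[OF walk_fwd(1) walk_fwd(3)[OF walk_fwd(4)]]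
    by (simp add: add.assoc)
next
  case (walk_bwd e b L)
  then show ?case using walk.walk_bwd[OF walk_bwd(1) walk_bwd(3)[OF walk_bwd(4)]]
    by (simp add: add.assoc)
qed

lemma walk_edge_fwd: "e \<in> medges G \<Longrightarrow> walk G (esrc G e) (etgt G e) (elen G e)"
  using walk.walk_fwd[OF _ walk_nil[of "etgt G e"]] tgt_in_verts by simp

lemma walk_edge_bwd: "e \<in> medges G \<Longrightarrow> walk G (etgt G e) (esrc G e) (elen G e)"
  using walk.walk_bwd[OF _ walk_nil[of "esrc G e"]] src_in_verts by simp

lemma walk_reverse: "walk G a b L \<Longrightarrow> walk G b a L"
proof (induction rule: walk.induct)
  case (walk_nil a)
  then show ?case by (rule walk.walk_nil)
next
  case (walk_fwd e b L)
  then show ?case using walk_append[OF walk_fwd(3) walk_edge_bwd[OF walk_fwd(1)]] by (simp add: add.commute)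
next
  case (walk_bwd e b L)
  then show ?case using walk_append[OF walk_bwd(3) walk_edge_fwd[OF walk_bwd(1)]] by (simp add: add.commute)
qed

lemma walk_ge_min_edge_len: "walk G a b L \<Longrightarrow> a \<noteq> b \<Longrightarrow> min_edge_len \<le> L"
  by (induction rule: walk.induct) (auto dest: walk_nonneg intro: add_increasing2 min_edge_len_le)

lemma walk_exists:
  assumes a: "a \<in> mverts G" and b: "b \<in> mverts G"
  shows "\<exists>L. walk G a b L"
  using verts_connected[OF a b]
proof (induction rule: rtranclp_induct)
  case base
  then show ?case using walk_nil[OF a] by blast
next
  case (step y z)
  then obtain L where L: "walk G a y L" by blast
  from step(2) obtain e where e: "e \<in> medges G" "{y, z} = {esrc G e, etgt G e}"
    unfolding adjacent_def by blast
  then consider "y = esrc G e" "z = etgt G e" | "y = etgt G e" "z = esrc G e"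
    by (auto simp: doubleton_eq_iff)
  then show ?case
    by cases (use walk_append[OF L] walk_edge_fwd[OF e(1)] walk_edge_bwd[OF e(1)] in metis)+
qed

lemma walk_edge_list:
  "walk G a b L \<Longrightarrow>
    \<exists>es. set es \<subseteq> medges G \<and> L = sum_list (map (elen G) es) \<and> real (length es) * min_edge_len \<le> L"
proof (induction rule: walk.induct)
  case (walk_nil a)
  then show ?case by (intro exI[of _ "[]"]) simp
next
  case (walk_fwd e b L)
  then obtain es where "set es \<subseteq> medges G" "L = sum_list (map (elen G) es)"
    "real (length es) * min_edge_len \<le> L"
    by blast
  then show ?case using min_edge_len_le[OF walk_fwd(1)] walk_fwd(1)
    by (intro exI[of _ "e # es"]) (auto simp: algebra_simps)
next
  case (walk_bwd e b L)
  then obtain es where "set es \<subseteq> medges G" "L = sum_list (map (elen G) es)"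
    "real (length es) * min_edge_len \<le> L"
    by blast
  then show ?case using min_edge_len_le[OF walk_bwd(1)] walk_bwd(1)
    by (intro exI[of _ "e # es"]) (auto simp: algebra_simps)
qed

lemma finite_walk_lengths_le: "finite {L. walk G a b L \<and> L \<le> L0}"
proof -
  define N where "N = nat \<lceil>L0 / min_edge_len\<rceil>"
  have "{L. walk G a b L \<and> L \<le> L0} \<subseteq>
      (\<lambda>es. sum_list (map (elen G) es)) ` {es. set es \<subseteq> medges G \<and> length es \<le> N}"
  proof
    fix L assume "L \<in> {L. walk G a b L \<and> L \<le> L0}"
    then have L: "walk G a b L" "L \<le> L0" by auto
    obtain es where es: "set es \<subseteq> medges G" "L = sum_list (map (elen G) es)"
      "real (length es) * min_edge_len \<le> L"
      using walk_edge_list[OF L(1)] by blast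
    have "real (length es) \<le> L0 / min_edge_len"
      using es(3) L(2) min_edge_len_pos by (simp add: field_simps)
    then have "length es \<le> N" unfolding N_def by linarith
    then show "L \<in> (\<lambda>es. sum_list (map (elen G) es)) ` {es. set es \<subseteq> medges G \<and> length es \<le> N}"
      using es by blast
  qed
  then show ?thesis
    by (rule finite_subset) (intro finite_imageI finite_lists_length_le finite_edges)
qed

lemma shortest_walk:
  assumes a: "a \<in> mverts G" and b: "b \<in> mverts G"
  shows "walk G a b (vdist G a b)" "walk G a b L \<Longrightarrow> vdist G a b \<le> L"
proof -
  obtain L0 where L0: "walk G a b L0" using walk_exists[OF a b] by blast
  define S where "S = {L. walk G a b L \<and> L \<le> L0}"
  have S: "finite S" "S \<noteq> {}" unfolding S_def using finite_walk_lengths_le L0 by auto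
  have min: "Min S \<le> L" if "walk G a b L" for L
    using Min_le[OF S(1), of L] Min_le[OF S(1), of L0] that L0 unfolding S_def by force
  have "vdist G a b = Min S"
    unfolding vdist_def using Min_in[OF S] min unfolding S_def by (intro cInf_eq_minimum) auto
  then show "walk G a b (vdist G a b)" "walk G a b L \<Longrightarrow> vdist G a b \<le> L"
    using Min_in[OF S] min unfolding S_def by auto
qed

lemma vdist_le: "walk G a b L \<Longrightarrow> vdist G a b \<le> L"
  using shortest_walk walk_verts by blast

lemma vdist_nonneg: "a \<in> mverts G \<Longrightarrow> b \<in> mverts G \<Longrightarrow> vdist G a b \<ge> 0"
  using walk_nonneg[OF shortest_walk(1)] by blast

lemma vdist_self: "a \<in> mverts G \<Longrightarrow> vdist G a a = 0"
  using vdist_le[OF walk_nil[of a]] vdist_nonneg[of a a] by simp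

lemma vdist_triangle:
  "a \<in> mverts G \<Longrightarrow> b \<in> mverts G \<Longrightarrow> c \<in> mverts G \<Longrightarrow> vdist G a c \<le> vdist G a b + vdist G b c"
  using vdist_le[OF walk_append[OF shortest_walk(1) shortest_walk(1)]] by blast

lemma vdist_commute: "vdist G a b = vdist G b a"
proof -
  have "{L. walk G a b L} = {L. walk G b a L}" using walk_reverse by blast
  then show ?thesis unfolding vdist_def by simp
qed

lemma vdist_ge_min_edge_len:
  "a \<in> mverts G \<Longrightarrow> b \<in> mverts G \<Longrightarrow> a \<noteq> b \<Longrightarrow> min_edge_len \<le> vdist G a b"
  using walk_ge_min_edge_len[OF shortest_walk(1)] by blast

lemma gpos_0 [simp]: "gpos G e 0 = GV (esrc G e)"
  unfolding gpos_def by simp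

lemma gpos_elen: "e \<in> medges G \<Longrightarrow> gpos G e (elen G e) = GV (etgt G e)"
  using elen_pos[of e] unfolding gpos_def by simp

lemma gpos_interior: "0 < s \<Longrightarrow> s < elen G e \<Longrightarrow> gpos G e s = GE e s"
  unfolding gpos_def by simp

lemma gpos_in_gpoints: "e \<in> medges G \<Longrightarrow> s \<in> {0..elen G e} \<Longrightarrow> gpos G e s \<in> gpoints G"
  unfolding gpos_def gpoints_def using src_in_verts tgt_in_verts by auto

lemma gpos_eq_GE: "gpos G e s = GE e' t \<Longrightarrow> e' = e \<and> t = s"
  unfolding gpos_def by (auto split: if_splits)

lemma gpos_eq_GV:
  "e \<in> medges G \<Longrightarrow> gpos G e s = GV v \<Longrightarrow> (v = esrc G e \<or> v = etgt G e) \<and> s = coord_from G e v 0"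
  using src_ne_tgt[of e] unfolding gpos_def coord_from_def by (auto split: if_splits)

lemma gpos_inj: "e \<in> medges G \<Longrightarrow> gpos G e s = gpos G e t \<Longrightarrow> s = t"
  using src_ne_tgt[of e] elen_pos[of e] unfolding gpos_def by (auto split: if_splits)

lemma gpos_eq_other_edge:
  "e \<noteq> e' \<Longrightarrow> gpos G e s = gpos G e' t \<Longrightarrow> \<exists>v. gpos G e s = GV v"
  by (metis gpoint.exhaust gpos_eq_GE)

lemma gpos_coord_from_0:
  "e \<in> medges G \<Longrightarrow> v = esrc G e \<or> v = etgt G e \<Longrightarrow> gpos G e (coord_from G e v 0) = GV v"
  unfolding coord_from_def using gpos_elen by auto

lemma coord_from_in: "d \<in> {0..elen G e} \<Longrightarrow> coord_from G e v d \<in> {0..elen G e}"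
  unfolding coord_from_def by auto

lemma coord_from_coord_from [simp]: "coord_from G e v (coord_from G e v d) = d"
  unfolding coord_from_def by simp

lemma gpos_cases:
  assumes "e \<in> medges G" "c \<in> {0..elen G e}"
  obtains "0 < c" "c < elen G e" "gpos G e c = GE e c"
    | x where "x = esrc G e \<or> x = etgt G e" "c = coord_from G e x 0" "gpos G e c = GV x"
proof -
  consider "c = 0" | "c = elen G e" | "0 < c" "c < elen G e" using assms(2) by fastforce
  then show ?thesis
  proof cases
    case 1
    then show ?thesis using that(2)[of "esrc G e"] by (simp add: coord_from_def)
  next
    case 2
    then show ?thesis using that(2)[of "etgt G e"] src_ne_tgt[OF assms(1)] gpos_elen[OF assms(1)]
      by (simp add: coord_from_def)
  qed (use that(1) gpos_interior in blast)
qed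

lemma vdist_endpoints:
  assumes e: "e \<in> medges G" and x: "x = esrc G e \<or> x = etgt G e" and v: "v = esrc G e \<or> v = etgt G e"
  shows "vdist G x v \<le> \<bar>coord_from G e x 0 - coord_from G e v 0\<bar>"
  using x v vdist_self src_in_verts[OF e] tgt_in_verts[OF e] src_ne_tgt[OF e]
    vdist_le[OF walk_edge_fwd[OF e]] vdist_le[OF walk_edge_bwd[OF e]] elen_pos[OF e]
  unfolding coord_from_def by auto

lemma anch_gpos:
  assumes e: "e \<in> medges G" and c: "c \<in> {0..elen G e}" and w: "(w, b) \<in> anch G (gpos G e c)"
  shows "(w = esrc G e \<or> w = etgt G e) \<and> b = \<bar>c - coord_from G e w 0\<bar>"
  using e c w src_ne_tgt[OF e] by (cases rule: gpos_cases) (auto simp: coord_from_def)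

lemma anch_in_verts: "p \<in> gpoints G \<Longrightarrow> (x, a) \<in> anch G p \<Longrightarrow> x \<in> mverts G \<and> 0 \<le> a"
  unfolding gpoints_def using src_in_verts tgt_in_verts by auto

lemma anch_reaches_endpoint:
  assumes e: "e \<in> medges G" and c: "c \<in> {0..elen G e}" and v: "v = esrc G e \<or> v = etgt G e"
  obtains x a where "(x, a) \<in> anch G (gpos G e c)" "a + vdist G x v \<le> \<bar>c - coord_from G e v 0\<bar>"
  using e c
proof (cases rule: gpos_cases)
  case 1
  then have "(v, \<bar>c - coord_from G e v 0\<bar>) \<in> anch G (gpos G e c)"
    using v src_ne_tgt[OF e] by (auto simp: coord_from_def)
  then show ?thesis
    using that vdist_self v src_in_verts[OF e] tgt_in_verts[OF e] by fastforce
next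
  case (2 x)
  then show ?thesis using that[of x 0] vdist_endpoints[OF e 2(1) v] by simp
qed

definition gdist_candidates :: "('v, 'e) gpoint \<Rightarrow> ('v, 'e) gpoint \<Rightarrow> real set" where
  "gdist_candidates p q =
     {a + vdist G x y + b | x a y b. (x, a) \<in> anch G p \<and> (y, b) \<in> anch G q}
     \<union> {\<bar>s - t\<bar> | e s t. e \<in> medges G \<and> s \<in> {0..elen G e} \<and> t \<in> {0..elen G e}
            \<and> p = gpos G e s \<and> q = gpos G e t}"

lemma finite_gdist_candidates: "finite (gdist_candidates p q)"
proof -
  have A: "{a + vdist G x y + b | x a y b. (x, a) \<in> anch G p \<and> (y, b) \<in> anch G q}
      = (\<lambda>((x, a), (y, b)). a + vdist G x y + b) ` (anch G p \<times> anch G q)"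
    by force
  define C where "C r = insert 0 (insert (case r of GV _ \<Rightarrow> 0 | GE _ t \<Rightarrow> t) (elen G ` medges G))"
    for r :: "('v, 'e) gpoint"
  have C: "s \<in> C (gpos G e s)" if "e \<in> medges G" for e s
    using that unfolding C_def gpos_def by auto
  have sub: "{\<bar>s - t\<bar> | e s t. e \<in> medges G \<and> s \<in> {0..elen G e} \<and> t \<in> {0..elen G e}
            \<and> p = gpos G e s \<and> q = gpos G e t} \<subseteq> (\<lambda>(s, t). \<bar>s - t\<bar>) ` (C p \<times> C q)"
    using C by fastforce
  moreover have "finite (C r)" for r unfolding C_def using finite_edges by simp
  moreover have "finite (anch G r)" for r by (cases r) auto
  ultimately show ?thesis unfolding gdist_candidates_def A
    by (intro finite_UnI finite_imageI finite_cartesian_product finite_subset[OF sub])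
qed

lemma gdist_in_candidates: "gdist G p q \<in> gdist_candidates p q"
proof -
  obtain x a y b where "(x, a) \<in> anch G p" "(y, b) \<in> anch G q"
    by (cases p; cases q) auto
  then have "gdist_candidates p q \<noteq> {}" unfolding gdist_candidates_def by blast
  then show ?thesis
    using finite_gdist_candidates unfolding gdist_def gdist_candidates_def[symmetric]
    by (simp add: cInf_eq_Min)
qed

lemma gdist_le_candidate: "z \<in> gdist_candidates p q \<Longrightarrow> gdist G p q \<le> z"
  unfolding gdist_def gdist_candidates_def[symmetric] using finite_gdist_candidates
  by (intro cInf_lower) (auto intro: bdd_below_finite)

lemma gdist_le_anch: "(x, a) \<in> anch G p \<Longrightarrow> (y, b) \<in> anch G q \<Longrightarrow> gdist G p q \<le> a + vdist G x y + b"
  by (rule gdist_le_candidate) (auto simp: gdist_candidates_def)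

lemma gdist_cases:
  obtains (vertices) x a y b where "(x, a) \<in> anch G p" "(y, b) \<in> anch G q" "gdist G p q = a + vdist G x y + b"
  | (edge) e s t where "e \<in> medges G" "s \<in> {0..elen G e}" "t \<in> {0..elen G e}" "p = gpos G e s" "q = gpos G e t"
     "gdist G p q = \<bar>s - t\<bar>"
  using gdist_in_candidates[of p q] unfolding gdist_candidates_def by blast

lemma gdist_commute: "gdist G p q = gdist G q p"
proof -
  have "gdist_candidates p' q' \<subseteq> gdist_candidates q' p'" for p' q'
  proof
    fix z assume "z \<in> gdist_candidates p' q'"
    then consider x a y b where "(x, a) \<in> anch G p'" "(y, b) \<in> anch G q'" "z = b + vdist G y x + a"
      | e s t where "e \<in> medges G" "s \<in> {0..elen G e}" "t \<in> {0..elen G e}" "p' = gpos G e s"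
          "q' = gpos G e t" "z = \<bar>t - s\<bar>"
      unfolding gdist_candidates_def by (auto simp: vdist_commute abs_minus_commute)
    then show "z \<in> gdist_candidates q' p'"
    proof cases
      case (1 x a y b)
      then show ?thesis unfolding gdist_candidates_def
        by (intro UnI1 CollectI exI[of _ y] exI[of _ b] exI[of _ x] exI[of _ a]) simp
    next
      case (2 e s t)
      then show ?thesis unfolding gdist_candidates_def
        by (intro UnI2 CollectI exI[of _ e] exI[of _ t] exI[of _ s]) simp
    qed
  qed
  then have "gdist_candidates p q = gdist_candidates q p" by blast
  then show ?thesis unfolding gdist_def gdist_candidates_def by simp
qed

lemma gpoint_on_edge:
  assumes "p \<in> gpoints G"
  obtains e s where "e \<in> medges G" "s \<in> {0..elen G e}" "p = gpos G e s"
proof (cases p)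
  case (GV v)
  then have "v \<in> mverts G" using assms unfolding gpoints_def by auto
  then obtain e where "e \<in> medges G" "v = esrc G e \<or> v = etgt G e"
    using inc_edges_nonempty unfolding inc_edges_def by blast
  then show ?thesis
    using that[of e "coord_from G e v 0"] GV gpos_coord_from_0 coord_from_in[of 0 e v] elen_pos
    by (simp add: less_imp_le)
next
  case (GE e t)
  then show ?thesis using that[of e t] assms gpos_interior[of t e] unfolding gpoints_def by auto
qed

lemma anch_same_edge:
  assumes x: "x \<in> gpoints G" and xa: "(x0, a) \<in> anch G x"
  obtains e c d where "e \<in> medges G" "c \<in> {0..elen G e}" "d \<in> {0..elen G e}"
    "x = gpos G e c" "GV x0 = gpos G e d" "a = \<bar>d - c\<bar>"
proof (cases x)
  case (GV v)
  obtain e c where "e \<in> medges G" "c \<in> {0..elen G e}" "x = gpos G e c"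
    using gpoint_on_edge[OF x] by blast
  moreover have "x0 = v" "a = 0" using xa GV by auto
  ultimately show ?thesis using that[of e c c] GV by auto
next
  case (GE e t)
  then have e: "e \<in> medges G" "0 < t" "t < elen G e" using x unfolding gpoints_def by auto
  have x_eq: "x = gpos G e t" using GE e gpos_interior by simp
  consider "x0 = esrc G e" "a = t" | "x0 = etgt G e" "a = elen G e - t" using xa GE by auto
  then show ?thesis
  proof cases
    case 1
    then show ?thesis using that[of e t 0] e x_eq by auto
  next
    case 2
    then show ?thesis using that[of e t "elen G e"] e x_eq gpos_elen[OF e(1)] by auto
  qed
qed

lemma gdist_self: "p \<in> gpoints G \<Longrightarrow> gdist G p p = 0"
  by (metis gpoint_on_edge gdist_on_edge diff_self abs_zero)

lemma gdist_nonneg: "p \<in> gpoints G \<Longrightarrow> q \<in> gpoints G \<Longrightarrow> gdist G p q \<ge> 0"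
  by (cases rule: gdist_cases[of p q]) (auto dest: anch_in_verts intro!: add_nonneg_nonneg vdist_nonneg)

lemma gdist_edge_step:
  assumes e: "e \<in> medges G" and c0: "c0 \<in> {0..elen G e}" and c1: "c1 \<in> {0..elen G e}"
    and y: "y \<in> gpoints G"
  shows "gdist G (gpos G e c0) y \<le> \<bar>c0 - c1\<bar> + gdist G (gpos G e c1) y"
proof -
  have x: "gpos G e c0 \<in> gpoints G" using gpos_in_gpoints[OF e c0] .
  have ends: "esrc G e \<in> mverts G" "etgt G e \<in> mverts G" using src_in_verts[OF e] tgt_in_verts[OF e] .
  show ?thesis
  proof (cases rule: gdist_cases[of "gpos G e c1" y])
    case (vertices w b y0 b')
    then have w: "w = esrc G e \<or> w = etgt G e" "b = \<bar>c1 - coord_from G e w 0\<bar>"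
      using anch_gpos[OF e c1] by auto
    obtain x0 a where xa: "(x0, a) \<in> anch G (gpos G e c0)" "a + vdist G x0 w \<le> \<bar>c0 - coord_from G e w 0\<bar>"
      using anch_reaches_endpoint[OF e c0 w(1)] by blast
    have "gdist G (gpos G e c0) y \<le> a + vdist G x0 y0 + b'" using gdist_le_anch[OF xa(1) vertices(2)] .
    also have "\<dots> \<le> a + vdist G x0 w + vdist G w y0 + b'"
      using vdist_triangle anch_in_verts[OF x xa(1)] anch_in_verts[OF y vertices(2)] w(1) ends by force
    finally show ?thesis using xa(2) w(2) vertices(3) by linarith
  next
    case (edge e' s t)
    show ?thesis
    proof (cases "e' = e")
      case True
      then have "s = c1" "t \<in> {0..elen G e}" using gpos_inj[OF e] edge by auto
      then show ?thesis using gdist_on_edge[OF e c0, of t] edge True by simp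
    next
      case False
      then obtain v where v: "gpos G e c1 = GV v" using gpos_eq_other_edge edge(4) by metis
      have ve: "v = esrc G e \<or> v = etgt G e" "c1 = coord_from G e v 0" using gpos_eq_GV[OF e v] by auto
      have ve': "v = esrc G e' \<or> v = etgt G e'" "s = coord_from G e' v 0"
        using gpos_eq_GV[OF edge(1)] v edge(4) by auto
      obtain x0 a where xa: "(x0, a) \<in> anch G (gpos G e c0)" "a + vdist G x0 v \<le> \<bar>c0 - c1\<bar>"
        using anch_reaches_endpoint[OF e c0 ve(1)] ve(2) by metis
      obtain y0 b where yb: "(y0, b) \<in> anch G y" "b + vdist G y0 v \<le> \<bar>t - s\<bar>"
        using anch_reaches_endpoint[OF edge(1) edge(3) ve'(1)] ve'(2) edge(5) by metis
      have "gdist G (gpos G e c0) y \<le> a + vdist G x0 y0 + b" using gdist_le_anch[OF xa(1) yb(1)] .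
      also have "\<dots> \<le> a + vdist G x0 v + vdist G v y0 + b"
        using vdist_triangle anch_in_verts[OF x xa(1)] anch_in_verts[OF y yb(1)] ve(1) ends by force
      finally show ?thesis using xa(2) yb(2) edge(6) vdist_commute[of v y0] by (simp add: abs_minus_commute)
    qed
  qed
qed

end

section \<open>Paths along edges\<close>

(* A segment (e, a, b) runs along the edge e from coordinate a to coordinate b. *)
type_synonym 'e seg = "'e \<times> real \<times> real"

fun seg_len :: "'e seg \<Rightarrow> real" where
  "seg_len (e, a, b) = \<bar>b - a\<bar>"

definition path_len :: "'e seg list \<Rightarrow> real" where
  "path_len P = (\<Sum>sg\<leftarrow>P. seg_len sg)"

fun edge_path :: "('v, 'e) mgraph \<Rightarrow> ('v, 'e) gpoint \<Rightarrow> 'e seg list \<Rightarrow> ('v, 'e) gpoint \<Rightarrow> bool" where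
  "edge_path G x [] y \<longleftrightarrow> x = y"
| "edge_path G x ((e, a, b) # P) y \<longleftrightarrow> e \<in> medges G \<and> a \<in> {0..elen G e} \<and> b \<in> {0..elen G e} \<and>
      x = gpos G e a \<and> edge_path G (gpos G e b) P y"

fun path_point :: "('v, 'e) mgraph \<Rightarrow> ('v, 'e) gpoint \<Rightarrow> 'e seg list \<Rightarrow> real \<Rightarrow> ('v, 'e) gpoint" where
  "path_point G x [] s = x"
| "path_point G x ((e, a, b) # P) s = (if s \<le> \<bar>b - a\<bar> then gpos G e (a + sgn (b - a) * s)
      else path_point G (gpos G e b) P (s - \<bar>b - a\<bar>))"

lemma path_len_Nil [simp]: "path_len [] = 0"
  and path_len_Cons [simp]: "path_len ((e, a, b) # P) = \<bar>b - a\<bar> + path_len P"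
  and path_len_append: "path_len (P @ Q) = path_len P + path_len Q"
  unfolding path_len_def by simp_all

lemma seg_len_nonneg: "seg_len sg \<ge> 0"
  by (cases sg) auto

lemma path_len_nonneg: "path_len P \<ge> 0"
  unfolding path_len_def by (induction P) (auto intro: add_nonneg_nonneg seg_len_nonneg)

lemma path_len_take_Suc: "j < length P \<Longrightarrow> path_len (take (Suc j) P) = path_len (take j P) + seg_len (P ! j)"
  unfolding path_len_def by (simp add: take_Suc_conv_app_nth)

lemma path_len_take_mono: "j \<le> k \<Longrightarrow> path_len (take j P) \<le> path_len (take k P)"
proof -
  assume "j \<le> k"
  then have "take k P = take j P @ take (k - j) (drop j P)"
    by (metis le_add_diff_inverse take_add)
  then show ?thesis by (simp add: path_len_append path_len_nonneg)
qed

lemma path_len_take_le: "path_len (take j P) \<le> path_len P"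
  by (metis path_len_take_mono nat_le_linear take_all)

lemma edge_path_append_iff: "edge_path G x (P @ Q) y \<longleftrightarrow> (\<exists>w. edge_path G x P w \<and> edge_path G w Q y)"
  by (induction G x P y rule: edge_path.induct) auto

lemma edge_path_append: "edge_path G x P w \<Longrightarrow> edge_path G w Q y \<Longrightarrow> edge_path G x (P @ Q) y"
  using edge_path_append_iff by blast

lemma edge_path_filter: "edge_path G x P y \<Longrightarrow> edge_path G x (filter (\<lambda>sg. 0 < seg_len sg) P) y"
  by (induction G x P y rule: edge_path.induct) auto

lemma path_len_filter: "path_len (filter (\<lambda>sg. 0 < seg_len sg) P) = path_len P"
  unfolding path_len_def by (induction P) (auto simp: less_le seg_len_nonneg)

lemma edge_path_nth:
  "edge_path G x P y \<Longrightarrow> j < length P \<Longrightarrow> P ! j = (e, a, b) \<Longrightarrow>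
    e \<in> medges G \<and> a \<in> {0..elen G e} \<and> b \<in> {0..elen G e}"
proof (induction G x P y arbitrary: j rule: edge_path.induct)
  case (2 G x e' a' b' P y)
  then show ?case by (cases j) auto
qed simp

lemma edge_path_junction:
  "edge_path G x P y \<Longrightarrow> Suc j < length P \<Longrightarrow> P ! j = (e, a, b) \<Longrightarrow> P ! Suc j = (e', a', b') \<Longrightarrow>
    gpos G e b = gpos G e' a'"
proof (induction G x P y arbitrary: j rule: edge_path.induct)
  case (2 G x e0 a0 b0 P y)
  then show ?case by (cases j; cases P) auto
qed simp

lemma sgn_abs_cancel: "a + sgn (b - a) * \<bar>b - a\<bar> = (b::real)"
  by (cases "a < b"; cases "a = b") (auto simp: sgn_if)

lemma seg_coord_in:
  fixes a b d l :: real
  assumes "a \<in> {0..l}" "b \<in> {0..l}" "0 \<le> d" "d \<le> \<bar>b - a\<bar>"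
  shows "a + sgn (b - a) * d \<in> {0..l}"
  using assms by (cases "a < b"; cases "a = b") (auto simp: sgn_if)

lemma seg_coord_strictly_inside:
  fixes a b d l :: real
  assumes "a \<in> {0..l}" "b \<in> {0..l}" "0 < d" "d < \<bar>b - a\<bar>"
  shows "0 < a + sgn (b - a) * d \<and> a + sgn (b - a) * d < l"
  using assms by (cases "a < b"; cases "a = b") (auto simp: sgn_if)

lemma seg_coord_dist:
  fixes a b s t :: real
  shows "\<bar>(a + sgn (b - a) * s) - (a + sgn (b - a) * t)\<bar> = (if a = b then 0 else \<bar>s - t\<bar>)"
  by (cases "a < b"; cases "a = b") (auto simp: sgn_if abs_minus_commute)

lemma seg_coord_toward_vertex:
  assumes "b = coord_from G e v 0" "a \<in> {0..elen G e}" "a \<noteq> b"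
  shows "a + sgn (b - a) * (\<bar>b - a\<bar> - d) = coord_from G e v d"
  using assms by (auto simp: coord_from_def sgn_if)

lemma seg_coord_from_vertex:
  assumes "a = coord_from G e v 0" "b \<in> {0..elen G e}" "a \<noteq> b"
  shows "a + sgn (b - a) * d = coord_from G e v d"
  using assms by (auto simp: coord_from_def sgn_if)

lemma path_point_0: "edge_path G x P y \<Longrightarrow> path_point G x P 0 = x"
  by (cases "(G, x, P, y)" rule: edge_path.cases) auto

lemma path_point_end: "edge_path G x P y \<Longrightarrow> path_point G x P (path_len P) = y"
proof (induction G x P y rule: edge_path.induct)
  case (2 G x e a b P y)
  show ?case
  proof (cases "path_len P = 0")
    case True
    then have "y = gpos G e b" using 2 path_point_0[of G "gpos G e b" P y] by auto
    then show ?thesis using True by (simp add: sgn_abs_cancel)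
  next
    case False
    then show ?thesis using 2 path_len_nonneg[of P] by simp
  qed
qed simp

lemma path_point_on_seg:
  assumes "edge_path G x P y" "j < length P" "P ! j = (e, a, b)"
    "path_len (take j P) \<le> s" "s \<le> path_len (take (Suc j) P)"
  shows "path_point G x P s = gpos G e (a + sgn (b - a) * (s - path_len (take j P)))"
  using assms
proof (induction G x P y arbitrary: j s rule: edge_path.induct)
  case (2 G x e0 a0 b0 P y)
  show ?case
  proof (cases j)
    case 0
    then show ?thesis using 2 by simp
  next
    case (Suc j')
    have j': "j' < length P" "P ! j' = (e, a, b)" using 2 Suc by auto
    have \<tau>: "path_len (take j ((e0, a0, b0) # P)) = \<bar>b0 - a0\<bar> + path_len (take j' P)" using Suc by simp
    have IH: "path_point G (gpos G e0 b0) P (s - \<bar>b0 - a0\<bar>) =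
        gpos G e (a + sgn (b - a) * (s - \<bar>b0 - a0\<bar> - path_len (take j' P)))"
      using 2(1)[of j' "s - \<bar>b0 - a0\<bar>"] 2(2,5,6) j' Suc by (simp add: algebra_simps)
    show ?thesis
    proof (cases "s \<le> \<bar>b0 - a0\<bar>")
      case True
      then have "s = \<bar>b0 - a0\<bar>" "path_len (take j' P) = 0"
        using 2(5) \<tau> path_len_nonneg[of "take j' P"] by linarith+
      then have "path_point G (gpos G e0 b0) P (s - \<bar>b0 - a0\<bar>) = gpos G e0 b0"
        using path_point_0[of G "gpos G e0 b0" P y] 2(2) by simp
      then show ?thesis using True IH \<tau> \<open>s = _\<close> by (simp add: sgn_abs_cancel)
    next
      case False
      then show ?thesis using IH \<tau> by (simp add: algebra_simps)
    qed
  qed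
qed simp

lemma path_point_append:
  "edge_path G x (P @ Q) y \<Longrightarrow> 0 \<le> s \<Longrightarrow> s \<le> path_len P \<Longrightarrow> path_point G x (P @ Q) s = path_point G x P s"
proof (induction P arbitrary: x s)
  case Nil
  then show ?case using path_point_0[of G x Q y] by simp
next
  case (Cons sg P)
  obtain e a b where sg: "sg = (e, a, b)" by (cases sg)
  then show ?case using Cons by (cases "s \<le> \<bar>b - a\<bar>") auto
qed

lemma path_time_cover:
  assumes "P \<noteq> []" "0 \<le> s" "s \<le> path_len P"
  obtains j where "j < length P" "path_len (take j P) \<le> s" "s \<le> path_len (take (Suc j) P)"
proof -
  have "\<exists>j<length P. path_len (take j P) \<le> s \<and> s \<le> path_len (take (Suc j) P)"
    using assms
  proof (induction P arbitrary: s)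
    case (Cons sg P)
    obtain e a b where sg: "sg = (e, a, b)" by (cases sg)
    show ?case
    proof (cases "s \<le> \<bar>b - a\<bar> \<or> P = []")
      case True
      then show ?thesis using Cons sg by (intro exI[of _ 0]) auto
    next
      case False
      then obtain j where "j < length P" "path_len (take j P) \<le> s - \<bar>b - a\<bar>"
        "s - \<bar>b - a\<bar> \<le> path_len (take (Suc j) P)"
        using Cons.IH[of "s - \<bar>b - a\<bar>"] Cons.prems sg by auto
      then show ?thesis using sg by (intro exI[of _ "Suc j"]) auto
    qed
  qed simp
  then show ?thesis using that by blast
qed

context metric_graph_space
begin

lemma gdist_le_path_len: "edge_path G x P y \<Longrightarrow> y \<in> gpoints G \<Longrightarrow> gdist G x y \<le> path_len P"
proof (induction P arbitrary: x)
  case Nil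
  then show ?case using gdist_self by simp
next
  case (Cons sg P)
  obtain e a b where sg: "sg = (e, a, b)" by (cases sg)
  then have h: "e \<in> medges G" "a \<in> {0..elen G e}" "b \<in> {0..elen G e}" "x = gpos G e a"
    "edge_path G (gpos G e b) P y"
    using Cons(2) by auto
  then have "gdist G (gpos G e a) y \<le> \<bar>a - b\<bar> + gdist G (gpos G e b) y"
    using Cons(3) by (intro gdist_edge_step) auto
  moreover have "gdist G (gpos G e b) y \<le> path_len P" using Cons.IH[OF h(5) Cons(3)] .
  ultimately show ?case using h sg by (simp add: abs_minus_commute)
qed

lemma walk_edge_path: "walk G a b L \<Longrightarrow> \<exists>P. edge_path G (GV a) P (GV b) \<and> path_len P = L"
proof (induction rule: walk.induct)
  case (walk_nil a)
  then show ?case by (intro exI[of _ "[]"]) simp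
next
  case (walk_fwd e b L)
  then obtain P where "edge_path G (GV (etgt G e)) P (GV b)" "path_len P = L" by blast
  then show ?case using walk_fwd(1) gpos_elen[OF walk_fwd(1)] elen_pos[OF walk_fwd(1)]
    by (intro exI[of _ "(e, 0, elen G e) # P"]) auto
next
  case (walk_bwd e b L)
  then obtain P where "edge_path G (GV (esrc G e)) P (GV b)" "path_len P = L" by blast
  then show ?case using walk_bwd(1) gpos_elen[OF walk_bwd(1)] elen_pos[OF walk_bwd(1)]
    by (intro exI[of _ "(e, elen G e, 0) # P"]) auto
qed

lemma anch_edge_paths:
  assumes x: "x \<in> gpoints G" and xa: "(x0, a) \<in> anch G x"
  shows "\<exists>P. edge_path G x P (GV x0) \<and> path_len P = a"
    and "\<exists>P. edge_path G (GV x0) P x \<and> path_len P = a"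
proof -
  obtain e c d where ecd: "e \<in> medges G" "c \<in> {0..elen G e}" "d \<in> {0..elen G e}"
    "x = gpos G e c" "GV x0 = gpos G e d" "a = \<bar>d - c\<bar>"
    using anch_same_edge[OF x xa] by blast
  show "\<exists>P. edge_path G x P (GV x0) \<and> path_len P = a"
    using ecd by (intro exI[of _ "[(e, c, d)]"]) simp
  show "\<exists>P. edge_path G (GV x0) P x \<and> path_len P = a"
    using ecd by (intro exI[of _ "[(e, d, c)]"]) (simp add: abs_minus_commute)
qed

lemma shortest_edge_path:
  assumes x: "x \<in> gpoints G" and y: "y \<in> gpoints G"
  obtains P where "edge_path G x P y" "path_len P = gdist G x y"
proof (cases rule: gdist_cases[of x y])
  case (vertices x0 a y0 b)
  obtain P1 where P1: "edge_path G x P1 (GV x0)" "path_len P1 = a"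
    using anch_edge_paths(1)[OF x vertices(1)] by blast
  obtain P3 where P3: "edge_path G (GV y0) P3 y" "path_len P3 = b"
    using anch_edge_paths(2)[OF y vertices(2)] by blast
  have "x0 \<in> mverts G" "y0 \<in> mverts G"
    using anch_in_verts[OF x vertices(1)] anch_in_verts[OF y vertices(2)] by auto
  then obtain P2 where P2: "edge_path G (GV x0) P2 (GV y0)" "path_len P2 = vdist G x0 y0"
    using walk_edge_path[OF shortest_walk(1)] by blast
  show ?thesis
    using that[of "P1 @ P2 @ P3"] edge_path_append[OF P1(1) edge_path_append[OF P2(1) P3(1)]]
      P1(2) P2(2) P3(2) vertices(3)
    by (simp add: path_len_append)
next
  case (edge e s t)
  then show ?thesis using that[of "[(e, s, t)]"] by (auto simp: abs_minus_commute)
qed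

lemma path_point_in_gpoints:
  "edge_path G x P y \<Longrightarrow> x \<in> gpoints G \<Longrightarrow> 0 \<le> s \<Longrightarrow> s \<le> path_len P \<Longrightarrow> path_point G x P s \<in> gpoints G"
proof (induction P arbitrary: x s)
  case (Cons sg P)
  obtain e a b where sg: "sg = (e, a, b)" by (cases sg)
  show ?case
  proof (cases "s \<le> \<bar>b - a\<bar>")
    case True
    then show ?thesis using Cons.prems sg by (auto intro!: gpos_in_gpoints seg_coord_in)
  next
    case False
    then show ?thesis using Cons.prems sg by (auto intro!: Cons.IH gpos_in_gpoints)
  qed
qed simp

lemma gdist_path_point_le:
  assumes "edge_path G x P y" "x \<in> gpoints G" "0 \<le> m" "m \<le> s" "s \<le> path_len P"
  shows "gdist G (path_point G x P m) (path_point G x P s) \<le> s - m"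
  using assms
proof (induction P arbitrary: x m s)
  case Nil
  then show ?case by (simp add: gdist_self)
next
  case (Cons sg P)
  obtain e a b where sg: "sg = (e, a, b)" by (cases sg)
  define \<sigma> where "\<sigma> = sgn (b - a)"
  have e: "e \<in> medges G" "a \<in> {0..elen G e}" "b \<in> {0..elen G e}" "edge_path G (gpos G e b) P y"
    using Cons.prems sg by auto
  then have b: "gpos G e b \<in> gpoints G" by (simp add: gpos_in_gpoints)
  consider "s \<le> \<bar>b - a\<bar>" | "\<bar>b - a\<bar> < m" | "m \<le> \<bar>b - a\<bar>" "\<bar>b - a\<bar> < s" by linarith
  then show ?case
  proof cases
    case 1
    then have "a + \<sigma> * m \<in> {0..elen G e}" "a + \<sigma> * s \<in> {0..elen G e}"
      using seg_coord_in[OF e(2,3), of m] seg_coord_in[OF e(2,3), of s] Cons.prems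
      unfolding \<sigma>_def by auto
    then show ?thesis
      using 1 Cons.prems sg gdist_on_edge[OF e(1)] seg_coord_dist[of a b m s] unfolding \<sigma>_def by auto
  next
    case 2
    then show ?thesis
      using Cons.IH[OF e(4) b, of "m - \<bar>b - a\<bar>" "s - \<bar>b - a\<bar>"] Cons.prems sg by simp
  next
    case 3
    let ?z = "path_point G (gpos G e b) P (s - \<bar>b - a\<bar>)"
    have c0: "a + \<sigma> * m \<in> {0..elen G e}"
      using seg_coord_in[OF e(2,3), of m] 3 Cons.prems unfolding \<sigma>_def by auto
    have "\<bar>(a + \<sigma> * m) - b\<bar> = \<bar>b - a\<bar> - m"
      using seg_coord_dist[of a b m "\<bar>b - a\<bar>"] 3 Cons.prems sgn_abs_cancel[of a b] unfolding \<sigma>_def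
      by (auto split: if_splits)
    moreover have "?z \<in> gpoints G"
      using path_point_in_gpoints[OF e(4) b] 3 Cons.prems sg by simp
    moreover have "gdist G (gpos G e b) ?z \<le> s - \<bar>b - a\<bar>"
      using Cons.IH[OF e(4) b, of 0 "s - \<bar>b - a\<bar>"] 3 Cons.prems sg path_point_0[OF e(4)] by simp
    ultimately have "gdist G (gpos G e (a + \<sigma> * m)) ?z \<le> s - m"
      using gdist_edge_step[OF e(1) c0 e(3)] by fastforce
    then show ?thesis using 3 sg unfolding \<sigma>_def by simp
  qed
qed

lemma shortest_path_no_backtrack:
  assumes P: "edge_path G x P y" and y: "y \<in> gpoints G" and min: "path_len P = gdist G x y"
    and pos: "\<forall>sg\<in>set P. seg_len sg > 0" and j: "Suc j < length P"
    and Pj: "P ! j = (e, a, b)" and PSj: "P ! Suc j = (e, a', b')"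
  shows "sgn (b - a) = sgn (b' - a')"
proof (rule ccontr)
  assume backtrack: "sgn (b - a) \<noteq> sgn (b' - a')"
  define R where "R = drop (Suc (Suc j)) P"
  have "P = take j P @ P ! j # P ! Suc j # R"
    using j unfolding R_def by (simp add: id_take_nth_drop Cons_nth_drop_Suc)
  then have decomp: "P = take j P @ [(e, a, b), (e, a', b')] @ R" using Pj PSj by simp
  then have "edge_path G x (take j P @ [(e, a, b), (e, a', b')] @ R) y" using P by simp
  then obtain w1 w2 where w: "edge_path G x (take j P) w1" "edge_path G w1 [(e, a, b), (e, a', b')] w2"
    "edge_path G w2 R y"
    unfolding edge_path_append_iff by blast
  then have "b = a'" using gpos_inj[of e b a'] by simp
  then have "edge_path G w1 [(e, a, b')] w2" using w(2) by simp
  then have shortcut: "edge_path G x (take j P @ [(e, a, b')] @ R) y"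
    using w by (blast intro: edge_path_append)
  have "seg_len (P ! j) > 0" "seg_len (P ! Suc j) > 0" using pos j by simp_all
  then have "a \<noteq> b" "a' \<noteq> b'" using Pj PSj by auto
  then have "(a < b \<and> b' < a') \<or> (b < a \<and> a' < b')"
    using backtrack by (auto simp: sgn_if split: if_splits)
  then have "\<bar>b' - a\<bar> < \<bar>b - a\<bar> + \<bar>b' - a'\<bar>" using \<open>b = a'\<close> by auto
  then have "path_len (take j P @ [(e, a, b')] @ R) < path_len P"
    by (subst (2) decomp) (simp add: path_len_append)
  then show False using gdist_le_path_len[OF shortcut y] min by simp
qed

end

section \<open>Convex functions are viscosity sub-solutions\<close>

context metric_graph_space
begin

lemma convex_edge_chord:
  assumes cu: "mg_convex G u" and e: "e \<in> medges G"
    and abr: "0 \<le> a" "a < r" "r < b" "b \<le> elen G e"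
  shows "u (gpos G e r) \<le> ((b - r) * u (gpos G e a) + (r - a) * u (gpos G e b)) / (b - a)"
proof -
  let ?x = "gpos G e a" and ?y = "gpos G e b" and ?z = "gpos G e r"
  have on_e: "a \<in> {0..elen G e}" "b \<in> {0..elen G e}" "r \<in> {0..elen G e}" using abr by auto
  have d: "gdist G ?x ?y = b - a" "gdist G ?x ?z = r - a" "gdist G ?z ?y = b - r" "gdist G ?y ?z = b - r"
    using gdist_on_edge[OF e] on_e abr by auto
  have "?x \<noteq> ?y" using gpos_inj[OF e, of a b] abr by auto
  moreover have "on_min_path G ?x ?y ?z" unfolding on_min_path_def using d by simp
  ultimately have "u ?z \<le> gdist G ?y ?z / gdist G ?x ?y * u ?x + gdist G ?x ?z / gdist G ?x ?y * u ?y"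
    using cu gpos_in_gpoints[OF e] on_e unfolding mg_convex_def by blast
  also have "\<dots> = ((b - r) * u ?x + (r - a) * u ?y) / (b - a)"
    unfolding d by (simp add: add_divide_distrib)
  finally show ?thesis .
qed

lemma close_points_share_edge:
  assumes p: "p \<in> gpoints G"
  obtains r where "r > 0" "\<And>q. q \<in> gpoints G \<Longrightarrow> gdist G p q < r \<Longrightarrow>
     \<exists>e s t. e \<in> medges G \<and> s \<in> {0..elen G e} \<and> t \<in> {0..elen G e} \<and> p = gpos G e s \<and> q = gpos G e t"
proof (cases p)
  case (GV v)
  then have v: "v \<in> mverts G" using p unfolding gpoints_def by auto
  show ?thesis
  proof (rule that[OF min_edge_len_pos])
    fix q assume q: "q \<in> gpoints G" and close: "gdist G p q < min_edge_len"
    show "\<exists>e s t. e \<in> medges G \<and> s \<in> {0..elen G e} \<and> t \<in> {0..elen G e} \<and> p = gpos G e s \<and> q = gpos G e t"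
    proof (cases rule: gdist_cases[of p q])
      case (vertices x a y b)
      have "x = v" "a = 0" using vertices(1) GV by auto
      have y: "y \<in> mverts G" "b \<ge> 0" using anch_in_verts[OF q vertices(2)] by auto
      have "y = v"
        using vdist_ge_min_edge_len[OF v y(1)] close vertices(3) \<open>x = v\<close> \<open>a = 0\<close> y(2) by fastforce
      then show ?thesis
        using anch_same_edge[OF q vertices(2)] GV by (metis abs_minus_commute)
    qed blast
  qed
next
  case (GE e t)
  then have et: "e \<in> medges G" "0 < t" "t < elen G e" using p unfolding gpoints_def by auto
  show ?thesis
  proof (rule that[of "min t (elen G e - t)"])
    show "min t (elen G e - t) > 0" using et by simp
    fix q assume q: "q \<in> gpoints G" and close: "gdist G p q < min t (elen G e - t)"
    show "\<exists>e s t. e \<in> medges G \<and> s \<in> {0..elen G e} \<and> t \<in> {0..elen G e} \<and> p = gpos G e s \<and> q = gpos G e t"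
    proof (cases rule: gdist_cases[of p q])
      case (vertices x a y b)
      have "a \<ge> min t (elen G e - t)" using vertices(1) GE by auto
      moreover have "vdist G x y \<ge> 0" "b \<ge> 0"
        using anch_in_verts[OF p vertices(1)] anch_in_verts[OF q vertices(2)] vdist_nonneg by auto
      ultimately show ?thesis using close vertices(3) by linarith
    qed blast
  qed
qed

lemma convex_imp_usc:
  assumes cu: "mg_convex G u"
  shows "mg_usc G u"
  unfolding mg_usc_def
proof (intro ballI allI impI)
  fix x and \<epsilon> :: real assume x: "x \<in> gpoints G" and \<epsilon>: "\<epsilon> > 0"
  obtain r where r: "r > 0" "\<And>q. q \<in> gpoints G \<Longrightarrow> gdist G x q < r \<Longrightarrow>
     \<exists>e s t. e \<in> medges G \<and> s \<in> {0..elen G e} \<and> t \<in> {0..elen G e} \<and> x = gpos G e s \<and> q = gpos G e t"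
    using close_points_share_edge[OF x] by blast
  define near where "near e d \<longleftrightarrow> (\<forall>s\<in>{0..elen G e}. \<forall>t\<in>{0..elen G e}. x = gpos G e s \<longrightarrow>
      \<bar>t - s\<bar> < d \<longrightarrow> u (gpos G e t) < u x + \<epsilon>)" for e d
  have "\<exists>d>0. near e d" if e: "e \<in> medges G" for e
  proof (cases "\<exists>s\<in>{0..elen G e}. x = gpos G e s")
    case True
    then obtain s where s: "s \<in> {0..elen G e}" "x = gpos G e s" by blast
    have "usc_on {0..elen G e} (\<lambda>s. u (gpos G e s))"
      by (rule usc_on_Icc_of_chord) (rule convex_edge_chord[OF cu e])
    then obtain d where "d > 0" "\<And>t. t \<in> {0..elen G e} \<Longrightarrow> \<bar>t - s\<bar> < d \<Longrightarrow> u (gpos G e t) < u x + \<epsilon>"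
      using usc_onD[OF _ s(1) \<epsilon>] s(2) by (metis dist_real_def)
    then show ?thesis unfolding near_def using s gpos_inj[OF e] by metis
  qed (auto simp: near_def intro!: exI[of _ 1])
  then obtain d where d: "\<And>e. e \<in> medges G \<Longrightarrow> d e > 0 \<and> near e (d e)" by metis
  define \<delta> where "\<delta> = Min (insert r (d ` medges G))"
  have \<delta>: "\<delta> > 0" "\<delta> \<le> r" "\<And>e. e \<in> medges G \<Longrightarrow> \<delta> \<le> d e"
    unfolding \<delta>_def using finite_edges r(1) d by (auto simp: Min_gr_iff)
  show "\<exists>\<delta>>0. \<forall>y\<in>gpoints G. gdist G x y < \<delta> \<longrightarrow> u y < u x + \<epsilon>"
  proof (intro exI[of _ \<delta>] conjI ballI impI)
    fix y assume y: "y \<in> gpoints G" "gdist G x y < \<delta>"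
    then obtain e s t where est: "e \<in> medges G" "s \<in> {0..elen G e}" "t \<in> {0..elen G e}"
      "x = gpos G e s" "y = gpos G e t"
      using r(2) \<delta>(2) by force
    then have "\<bar>t - s\<bar> < d e"
      using y(2) \<delta>(3)[OF est(1)] gdist_on_edge[OF est(1-3)] by (simp add: abs_minus_commute)
    then show "u y < u x + \<epsilon>" using d[OF est(1)] est unfolding near_def by blast
  qed (rule \<delta>(1))
qed

lemma convex_edge_condition:
  assumes cu: "mg_convex G u" and e: "e \<in> medges G" and t: "0 < t" "t < elen G e"
    and \<delta>: "\<delta> > 0" and C2: "C2_on {t - \<delta> <..< t + \<delta>} \<phi> \<phi>' \<phi>''" and eq: "\<phi> t = u (GE e t)"
    and le: "\<forall>s. \<bar>s - t\<bar> < \<delta> \<and> 0 < s \<and> s < elen G e \<longrightarrow> u (GE e s) \<le> \<phi> s"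
  shows "\<phi>'' t \<ge> 0"
proof (rule deriv2_nonneg_of_midpoint_convex[OF \<delta>])
  show "\<And>x. \<bar>x - t\<bar> < \<delta> \<Longrightarrow> (\<phi> has_real_derivative \<phi>' x) (at x)"
    using C2 unfolding C2_on_def by (auto simp: abs_less_iff)
  show "(\<phi>' has_real_derivative \<phi>'' t) (at t)" using C2 \<delta> unfolding C2_on_def by auto
  show "min \<delta> (min t (elen G e - t)) > 0" using \<delta> t by simp
  fix h assume h: "0 < h" "h < min \<delta> (min t (elen G e - t))"
  have "u (gpos G e t) \<le> (h * u (gpos G e (t - h)) + h * u (gpos G e (t + h))) / (2 * h)"
    using convex_edge_chord[OF cu e, of "t - h" t "t + h"] h by (simp add: algebra_simps)
  also have "\<dots> = (u (gpos G e (t - h)) + u (gpos G e (t + h))) / 2"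
    using h by (simp add: field_simps)
  finally have "2 * u (gpos G e t) \<le> u (gpos G e (t - h)) + u (gpos G e (t + h))" by simp
  moreover have "gpos G e t = GE e t" "gpos G e (t - h) = GE e (t - h)" "gpos G e (t + h) = GE e (t + h)"
    using h t by (auto intro!: gpos_interior)
  moreover have "u (GE e (t - h)) \<le> \<phi> (t - h)" "u (GE e (t + h)) \<le> \<phi> (t + h)" using le h by auto
  ultimately show "2 * \<phi> t \<le> \<phi> (t + h) + \<phi> (t - h)" using eq by simp
qed

lemma convex_vertex_midpoint:
  assumes cu: "mg_convex G u" and v: "v \<in> mverts G"
    and e: "e \<in> inc_edges G v" and e': "e' \<in> inc_edges G v" and "e \<noteq> e'"
    and d: "0 < d" "2 * d < elen G e" "2 * d < elen G e'"
  shows "2 * u (GV v) \<le> u (gpos G e (coord_from G e v d)) + u (gpos G e' (coord_from G e' v d))"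
proof -
  have ends: "e \<in> medges G" "v = esrc G e \<or> v = etgt G e" "e' \<in> medges G" "v = esrc G e' \<or> v = etgt G e'"
    using e e' unfolding inc_edges_def by auto
  define c where "c f = coord_from G f v d" for f
  have c: "0 < c f" "c f < elen G f" "\<bar>c f - coord_from G f v 0\<bar> = d" "gpos G f (c f) = GE f (c f)"
    "(v, d) \<in> anch G (gpos G f (c f))" "\<And>x a. (x, a) \<in> anch G (gpos G f (c f)) \<Longrightarrow> d \<le> a"
    if "f \<in> medges G" "v = esrc G f \<or> v = etgt G f" "2 * d < elen G f" for f
    using that d(1) src_ne_tgt[OF that(1)] gpos_interior[of "c f" f]
    unfolding c_def coord_from_def by auto
  let ?x = "gpos G e (c e)" and ?y = "gpos G e' (c e')"
  have pts: "?x \<in> gpoints G" "?y \<in> gpoints G" "GV v \<in> gpoints G"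
    using c[OF ends(1,2) d(2)] c[OF ends(3,4) d(3)] gpos_in_gpoints ends v unfolding gpoints_def by auto
  have dxv: "gdist G ?x (GV v) = d" and dvy: "gdist G (GV v) ?y = d"
    using c[OF ends(1,2) d(2)] c[OF ends(3,4) d(3)] gdist_on_edge[OF ends(1), of "c e" "coord_from G e v 0"]
      gdist_on_edge[OF ends(3), of "coord_from G e' v 0" "c e'"] gpos_coord_from_0[OF ends(1,2)]
      gpos_coord_from_0[OF ends(3,4)] coord_from_in[of 0 e v] coord_from_in[of 0 e' v] elen_pos ends
    by (auto simp: abs_minus_commute)
  have dxy: "gdist G ?x ?y = 2 * d"
  proof (rule antisym)
    show "gdist G ?x ?y \<le> 2 * d"
      using gdist_le_anch[OF c(5)[OF ends(1,2) d(2)] c(5)[OF ends(3,4) d(3)]] vdist_self[OF v] by simp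
    show "2 * d \<le> gdist G ?x ?y"
    proof (cases rule: gdist_cases[of ?x ?y])
      case (vertices x a y b)
      then show ?thesis
        using c(6)[OF ends(1,2) d(2) vertices(1)] c(6)[OF ends(3,4) d(3) vertices(2)]
          anch_in_verts[OF pts(1) vertices(1)] anch_in_verts[OF pts(2) vertices(2)] vdist_nonneg by force
    next
      case (edge f s t)
      then show ?thesis
        using c(4)[OF ends(1,2) d(2)] c(4)[OF ends(3,4) d(3)] gpos_eq_GE \<open>e \<noteq> e'\<close> by metis
    qed
  qed
  have "?x \<noteq> ?y" using c(4)[OF ends(1,2) d(2)] c(4)[OF ends(3,4) d(3)] \<open>e \<noteq> e'\<close> by simp
  moreover have "on_min_path G ?x ?y (GV v)" unfolding on_min_path_def using dxv dvy dxy by simp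
  ultimately have "u (GV v) \<le> gdist G ?y (GV v) / gdist G ?x ?y * u ?x + gdist G ?x (GV v) / gdist G ?x ?y * u ?y"
    using cu pts unfolding mg_convex_def by blast
  also have "\<dots> = (u ?x + u ?y) / 2" using dxv dvy dxy d gdist_commute[of ?y "GV v"] by (simp add: field_simps)
  finally show ?thesis unfolding c_def by simp
qed

lemma ingoing_difference_quotient:
  assumes e: "e \<in> medges G" and v: "v = esrc G e \<or> v = etgt G e"
    and C1: "C1_closed (elen G e) (\<lambda>s. \<phi> (gpos G e s)) \<psi>"
  shows "((\<lambda>d. (\<phi> (gpos G e (coord_from G e v d)) - \<phi> (GV v)) / d) \<longlongrightarrow> ingoing G e v \<psi>) (at_right 0)"
proof (cases "v = esrc G e")
  case True
  have "((\<lambda>s. \<phi> (gpos G e s)) has_real_derivative \<psi> 0) (at 0 within {0..elen G e})"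
    using C1 elen_pos[OF e] unfolding C1_closed_def by auto
  from difference_quotient_at_start[OF elen_pos[OF e] this] show ?thesis
    using True unfolding coord_from_def ingoing_def by simp
next
  case False
  have "((\<lambda>s. \<phi> (gpos G e s)) has_real_derivative \<psi> (elen G e)) (at (elen G e) within {0..elen G e})"
    using C1 elen_pos[OF e] unfolding C1_closed_def by auto
  from difference_quotient_at_end[OF elen_pos[OF e] this] show ?thesis
    using False v gpos_elen[OF e] unfolding coord_from_def ingoing_def by simp
qed

lemma convex_vertex_condition:
  assumes cu: "mg_convex G u" and v: "v \<in> mverts G"
    and e: "e \<in> inc_edges G v" and e': "e' \<in> inc_edges G v" and "e \<noteq> e'"
    and C1: "C1_closed (elen G e) (\<lambda>s. \<phi> (gpos G e s)) \<psi>"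
    and C1': "C1_closed (elen G e') (\<lambda>s. \<phi> (gpos G e' s)) \<psi>'"
    and at_v: "\<phi> (GV v) = u (GV v)"
    and above: "\<forall>s\<in>{0..elen G e}. u (gpos G e s) \<le> \<phi> (gpos G e s)"
    and above': "\<forall>s\<in>{0..elen G e'}. u (gpos G e' s) \<le> \<phi> (gpos G e' s)"
  shows "ingoing G e v \<psi> + ingoing G e' v \<psi>' \<ge> 0"
proof -
  have ends: "e \<in> medges G" "v = esrc G e \<or> v = etgt G e" "e' \<in> medges G" "v = esrc G e' \<or> v = etgt G e'"
    using e e' unfolding inc_edges_def by auto
  let ?q = "\<lambda>f d. (\<phi> (gpos G f (coord_from G f v d)) - \<phi> (GV v)) / d"
  have "((\<lambda>d. ?q e d + ?q e' d) \<longlongrightarrow> ingoing G e v \<psi> + ingoing G e' v \<psi>') (at_right 0)"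
    using ingoing_difference_quotient[OF ends(1,2) C1] ingoing_difference_quotient[OF ends(3,4) C1']
    by (rule tendsto_add)
  moreover have "\<forall>\<^sub>F d in at_right 0. 0 \<le> ?q e d + ?q e' d"
    unfolding eventually_at_right_field
  proof (intro exI[of _ "min (elen G e) (elen G e') / 2"] conjI allI impI)
    show "(0::real) < min (elen G e) (elen G e') / 2" using elen_pos ends by simp
    fix d :: real assume "0 < d" "d < min (elen G e) (elen G e') / 2"
    then have d: "0 < d" "2 * d < elen G e" "2 * d < elen G e'" by auto
    have "coord_from G f v d \<in> {0..elen G f}" if "f \<in> medges G" "2 * d < elen G f" for f
      using coord_from_in[of d f v] that d(1) by simp
    then have "u (gpos G e (coord_from G e v d)) \<le> \<phi> (gpos G e (coord_from G e v d))"
      "u (gpos G e' (coord_from G e' v d)) \<le> \<phi> (gpos G e' (coord_from G e' v d))"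
      using above above' d ends by auto
    then have "0 \<le> (\<phi> (gpos G e (coord_from G e v d)) - \<phi> (GV v)) + (\<phi> (gpos G e' (coord_from G e' v d)) - \<phi> (GV v))"
      using convex_vertex_midpoint[OF cu v e e' \<open>e \<noteq> e'\<close> d] at_v by linarith
    then show "0 \<le> ?q e d + ?q e' d" using d(1) by (simp add: add_divide_distrib[symmetric])
  qed
  ultimately show ?thesis by (rule tendsto_lowerbound) simp
qed

lemma convex_imp_viscosity_subsolution:
  assumes cu: "mg_convex G u"
  shows "viscosity_subsolution G u"
  unfolding viscosity_subsolution_def
  using convex_imp_usc[OF cu] convex_edge_condition[OF cu] convex_vertex_condition[OF cu]
  by (intro conjI; blast)

end

section \<open>Viscosity sub-solutions are convex\<close>

definition junction_times :: "'e seg list \<Rightarrow> real set" where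
  "junction_times Q = (\<lambda>j. path_len (take j Q)) ` {0<..<length Q}"

lemma quadratic_penalty_dominates:
  fixes B a b c m \<eta> L \<rho> :: real
  assumes \<rho>: "\<rho> > 0"
  obtains K where "K > 0"
    "\<And>d \<sigma>. \<rho> \<le> d \<Longrightarrow> d \<le> L \<Longrightarrow> \<bar>\<sigma>\<bar> = 1 \<Longrightarrow>
      B \<le> a + b * (m + \<sigma> * d) + c * (m + \<sigma> * d)\<^sup>2 - \<eta> * d + K * d\<^sup>2"
proof -
  define M where "M = \<bar>m\<bar> + \<bar>L\<bar>"
  define C where "C = \<bar>B\<bar> + \<bar>a\<bar> + \<bar>b\<bar> * M + \<bar>c\<bar> * M\<^sup>2 + \<bar>\<eta>\<bar> * \<bar>L\<bar>"
  define K where "K = C / \<rho>\<^sup>2 + 1"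
  have "C \<ge> 0" unfolding C_def M_def by simp
  then have K: "K > 0" "K * \<rho>\<^sup>2 = C + \<rho>\<^sup>2" using \<rho> unfolding K_def
    by (simp_all add: field_simps add_nonneg_pos)
  have "B \<le> a + b * (m + \<sigma> * d) + c * (m + \<sigma> * d)\<^sup>2 - \<eta> * d + K * d\<^sup>2"
    if d: "\<rho> \<le> d" "d \<le> L" and \<sigma>: "\<bar>\<sigma>\<bar> = 1" for d \<sigma>
  proof -
    define x where "x = m + \<sigma> * d"
    have "\<bar>x\<bar> \<le> M" unfolding x_def M_def using d \<rho> \<sigma> abs_triangle_ineq[of m "\<sigma> * d"] by (simp add: abs_mult)
    moreover have "M \<ge> 0" unfolding M_def by simp
    ultimately have "x\<^sup>2 \<le> M\<^sup>2" by (metis abs_le_square_iff abs_of_nonneg)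
    have "\<bar>b * x\<bar> \<le> \<bar>b\<bar> * M" using \<open>\<bar>x\<bar> \<le> M\<close> by (simp add: abs_mult mult_left_mono)
    moreover have "\<bar>c * x\<^sup>2\<bar> \<le> \<bar>c\<bar> * M\<^sup>2" using \<open>x\<^sup>2 \<le> M\<^sup>2\<close> by (simp add: abs_mult mult_left_mono)
    moreover have "\<eta> * d \<le> \<bar>\<eta>\<bar> * \<bar>L\<bar>"
    proof -
      have "\<eta> * d \<le> \<bar>\<eta>\<bar> * d" using d \<rho> by (intro mult_right_mono) auto
      also have "\<dots> \<le> \<bar>\<eta>\<bar> * \<bar>L\<bar>" using d \<rho> by (intro mult_left_mono) auto
      finally show ?thesis .
    qed
    moreover have "K * \<rho>\<^sup>2 \<le> K * d\<^sup>2" using d \<rho> K(1) by (intro mult_left_mono power_mono) auto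
    moreover have "- (b * x) \<le> \<bar>b * x\<bar>" "- (c * x\<^sup>2) \<le> \<bar>c * x\<^sup>2\<bar>" "- a \<le> \<bar>a\<bar>" "B \<le> \<bar>B\<bar>" "0 \<le> \<rho>\<^sup>2"
      by simp_all
    ultimately show ?thesis using K(2) unfolding C_def x_def by linarith
  qed
  then show ?thesis using that K(1) by blast
qed

lemma viscosity_subsolution_usc: "viscosity_subsolution G u \<Longrightarrow> mg_usc G u"
  unfolding viscosity_subsolution_def by simp

lemma viscosity_subsolutionD_edge:
  assumes vs: "viscosity_subsolution G u" and e: "e \<in> medges G" and t: "0 < t" "t < elen G e"
    and \<delta>: "\<delta> > 0" and C2: "C2_on {t - \<delta> <..< t + \<delta>} \<phi> \<phi>' \<phi>''" and at_t: "\<phi> t = u (GE e t)"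
    and above: "\<And>s. \<bar>s - t\<bar> < \<delta> \<Longrightarrow> 0 < s \<Longrightarrow> s < elen G e \<Longrightarrow> u (GE e s) \<le> \<phi> s"
  shows "\<phi>'' t \<ge> 0"
proof -
  have "\<forall>e\<in>medges G. \<forall>t. 0 < t \<and> t < elen G e \<longrightarrow>
        (\<forall>\<delta>>0. \<forall>\<phi> \<phi>' \<phi>''. C2_on {t - \<delta> <..< t + \<delta>} \<phi> \<phi>' \<phi>'' \<and> \<phi> t = u (GE e t) \<and>
           (\<forall>s. \<bar>s - t\<bar> < \<delta> \<and> 0 < s \<and> s < elen G e \<longrightarrow> u (GE e s) \<le> \<phi> s)
           \<longrightarrow> \<phi>'' t \<ge> 0)"
    using vs unfolding viscosity_subsolution_def by (elim conjE)
  then show ?thesis using e t \<delta> C2 at_t above by blast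
qed

lemma C1_closed_coord_from:
  assumes deriv: "\<And>d. (q has_real_derivative q' d) (at d)" and cont: "continuous_on UNIV q'"
    and F: "\<And>s. s \<in> {0..elen G e} \<Longrightarrow> F s = q (coord_from G e v s)"
  shows "C1_closed (elen G e) F (\<lambda>s. (if v = esrc G e then 1 else -1) * q' (coord_from G e v s))"
  unfolding C1_closed_def
proof (intro conjI ballI)
  fix s assume s: "s \<in> {0..elen G e}"
  have "((\<lambda>s. q (coord_from G e v s)) has_real_derivative
      (if v = esrc G e then 1 else -1) * q' (coord_from G e v s)) (at s)"
  proof (cases "v = esrc G e")
    case False
    have "((\<lambda>s. q (elen G e - s)) has_real_derivative q' (elen G e - s) * (- 1)) (at s)"
      by (rule DERIV_chain2[OF deriv]) (auto intro!: derivative_eq_intros)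
    then show ?thesis using False unfolding coord_from_def by simp
  qed (simp add: coord_from_def deriv)
  then show "(F has_real_derivative (if v = esrc G e then 1 else -1) * q' (coord_from G e v s))
      (at s within {0..elen G e})"
    by (rule has_field_derivative_transform_within[OF has_field_derivative_at_within, of _ _ _ 1])
      (use s F in auto)
next
  show "continuous_on {0..elen G e} (\<lambda>s. (if v = esrc G e then 1 else -1) * q' (coord_from G e v s))"
    unfolding coord_from_def
    by (cases "v = esrc G e") (auto intro!: continuous_intros continuous_on_compose2[OF cont])
qed

lemma ingoing_coord_from:
  "esrc G e \<noteq> etgt G e \<Longrightarrow> v = esrc G e \<or> v = etgt G e \<Longrightarrow>
    ingoing G e v (\<lambda>s. (if v = esrc G e then 1 else -1) * q' (coord_from G e v s)) = q' 0"
  unfolding ingoing_def coord_from_def by auto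

lemma viscosity_subsolutionD_vertex:
  assumes vs: "viscosity_subsolution G u" and v: "v \<in> mverts G" "card (inc_edges G v) > 1"
    and e: "e \<in> inc_edges G v" "e' \<in> inc_edges G v" "e \<noteq> e'"
    and C1: "C1_closed (elen G e) (\<lambda>s. \<phi> (gpos G e s)) \<psi>" "C1_closed (elen G e') (\<lambda>s. \<phi> (gpos G e' s)) \<psi>'"
    and at_v: "\<phi> (GV v) = u (GV v)"
    and above: "\<forall>s\<in>{0..elen G e}. u (gpos G e s) \<le> \<phi> (gpos G e s)"
      "\<forall>s\<in>{0..elen G e'}. u (gpos G e' s) \<le> \<phi> (gpos G e' s)"
  shows "ingoing G e v \<psi> + ingoing G e' v \<psi>' \<ge> 0"
proof -
  have "\<forall>v\<in>mverts G. card (inc_edges G v) > 1 \<longrightarrow>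
        (\<forall>e\<in>inc_edges G v. \<forall>e'\<in>inc_edges G v. e \<noteq> e' \<longrightarrow>
          (\<forall>\<phi> \<phi>e' \<phi>f'.
             C1_closed (elen G e) (\<lambda>s. \<phi> (gpos G e s)) \<phi>e' \<and>
             C1_closed (elen G e') (\<lambda>s. \<phi> (gpos G e' s)) \<phi>f' \<and>
             \<phi> (GV v) = u (GV v) \<and>
             (\<forall>s\<in>{0..elen G e}. u (gpos G e s) \<le> \<phi> (gpos G e s)) \<and>
             (\<forall>s\<in>{0..elen G e'}. u (gpos G e' s) \<le> \<phi> (gpos G e' s))
             \<longrightarrow> ingoing G e v \<phi>e' + ingoing G e' v \<phi>f' \<ge> 0))"
    using vs unfolding viscosity_subsolution_def by (elim conjE)
  then show ?thesis using v e C1 at_v above by blast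
qed

context metric_graph_space
begin

lemma usc_on_path:
  assumes usc: "mg_usc G u" and Q: "edge_path G x Q y" and x: "x \<in> gpoints G"
  shows "usc_on {0..path_len Q} (\<lambda>s. u (path_point G x Q s))"
  unfolding usc_on_def
proof (intro ballI allI impI)
  fix m and \<epsilon> :: real assume m: "m \<in> {0..path_len Q}" and \<epsilon>: "\<epsilon> > 0"
  have pm: "path_point G x Q m \<in> gpoints G" using path_point_in_gpoints[OF Q x] m by auto
  obtain \<delta> where \<delta>: "\<delta> > 0"
    "\<forall>z\<in>gpoints G. gdist G (path_point G x Q m) z < \<delta> \<longrightarrow> u z < u (path_point G x Q m) + \<epsilon>"
    using usc pm \<epsilon> unfolding mg_usc_def by blast
  have "u (path_point G x Q s) < u (path_point G x Q m) + \<epsilon>"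
    if s: "s \<in> {0..path_len Q}" "dist s m < \<delta>" for s
  proof -
    have "gdist G (path_point G x Q m) (path_point G x Q s) \<le> \<bar>s - m\<bar>"
      using gdist_path_point_le[OF Q x, of m s] gdist_path_point_le[OF Q x, of s m] m s
        gdist_commute[of "path_point G x Q s"] by (cases "m \<le> s") auto
    then show ?thesis using \<delta>(2) s path_point_in_gpoints[OF Q x] by (auto simp: dist_real_def)
  qed
  then show "\<exists>\<delta>>0. \<forall>s\<in>{0..path_len Q}. dist s m < \<delta> \<longrightarrow>
      u (path_point G x Q s) < u (path_point G x Q m) + \<epsilon>"
    using \<delta>(1) by blast
qed

lemma viscosity_touch_along_edge:
  assumes vs: "viscosity_subsolution G u" and e: "e \<in> medges G" and c0: "0 < c0" "c0 < elen G e"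
    and \<sigma>: "\<bar>\<sigma>\<bar> = 1" and r: "r > 0"
    and param: "\<And>s. \<bar>s - m\<bar> < r \<Longrightarrow> s \<in> S \<and> F s = u (gpos G e (c0 + \<sigma> * (s - m)))"
    and touch: "touches_above F S m (\<lambda>s. a + b * s + c * s\<^sup>2)"
  shows "c \<ge> 0"
proof -
  obtain r' where r': "r' > 0" "\<forall>s\<in>S. \<bar>s - m\<bar> < r' \<longrightarrow> F s \<le> a + b * s + c * s\<^sup>2"
    "F m = a + b * m + c * m\<^sup>2"
    using touch unfolding touches_above_def by blast
  define \<delta> where "\<delta> = min r r'"
  define \<phi> where "\<phi> t = a + b * (m + \<sigma> * (t - c0)) + c * (m + \<sigma> * (t - c0))\<^sup>2" for t
  have \<sigma>\<sigma>: "\<sigma> * \<sigma> = 1" using \<sigma> by (metis abs_mult_self_eq mult_1_left)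
  have "C2_on {c0 - \<delta> <..< c0 + \<delta>} \<phi> (\<lambda>t. b * \<sigma> + 2 * c * (m + \<sigma> * (t - c0)) * \<sigma>) (\<lambda>t. 2 * c * (\<sigma> * \<sigma>))"
    unfolding C2_on_def \<phi>_def
    by (auto intro!: derivative_eq_intros continuous_intros simp: power2_eq_square algebra_simps)
  moreover have "\<phi> c0 = u (GE e c0)"
    using param[of m] r' r c0 gpos_interior[of c0 e] unfolding \<phi>_def by simp
  moreover have "u (GE e t) \<le> \<phi> t" if "\<bar>t - c0\<bar> < \<delta>" "0 < t" "t < elen G e" for t
  proof -
    let ?s = "m + \<sigma> * (t - c0)"
    have "\<bar>?s - m\<bar> = \<bar>t - c0\<bar>" using \<sigma> by (simp add: abs_mult)
    then have "?s \<in> S" "F ?s = u (gpos G e (c0 + \<sigma> * \<sigma> * (t - c0)))" "F ?s \<le> \<phi> t"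
      using param[of ?s] r' that unfolding \<delta>_def \<phi>_def by (auto simp: mult.assoc)
    then show ?thesis using \<sigma>\<sigma> gpos_interior[of t e] that by simp
  qed
  moreover have "\<delta> > 0" unfolding \<delta>_def using r r' by simp
  ultimately have "2 * c * (\<sigma> * \<sigma>) \<ge> 0"
    using viscosity_subsolutionD_edge[OF vs e c0] by blast
  then show ?thesis using \<sigma>\<sigma> by simp
qed

lemma path_point_inside_segment:
  assumes Q: "edge_path G x Q y" and ne: "Q \<noteq> []"
    and m: "m \<in> {0<..<path_len Q} - junction_times Q"
  obtains e c0 \<sigma> r where "e \<in> medges G" "0 < c0" "c0 < elen G e" "\<bar>\<sigma>\<bar> = 1" "r > 0"
    "\<And>s. \<bar>s - m\<bar> < r \<Longrightarrow> s \<in> {0..path_len Q} \<and> path_point G x Q s = gpos G e (c0 + \<sigma> * (s - m))"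
proof -
  obtain j where j: "j < length Q" "path_len (take j Q) \<le> m" "m \<le> path_len (take (Suc j) Q)"
    using path_time_cover[OF ne, of m] m by auto
  obtain e a b where Qj: "Q ! j = (e, a, b)" by (cases "Q ! j")
  define \<tau> where "\<tau> = path_len (take j Q)"
  have eab: "e \<in> medges G" "a \<in> {0..elen G e}" "b \<in> {0..elen G e}" using edge_path_nth[OF Q j(1) Qj] by auto
  have len: "path_len (take (Suc j) Q) = \<tau> + \<bar>b - a\<bar>"
    using path_len_take_Suc[OF j(1)] Qj unfolding \<tau>_def by simp
  have "\<tau> < m"
  proof (cases j)
    case (Suc j')
    then have "\<tau> \<in> junction_times Q" unfolding junction_times_def \<tau>_def using j by auto
    then show ?thesis using m j unfolding \<tau>_def by (metis DiffE order_le_less)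
  qed (use m in \<open>simp add: \<tau>_def\<close>)
  moreover have "m < \<tau> + \<bar>b - a\<bar>"
  proof (cases "Suc j < length Q")
    case True
    then have "path_len (take (Suc j) Q) \<in> junction_times Q" unfolding junction_times_def by auto
    then show ?thesis using m j len by (metis DiffE order_le_less)
  next
    case False
    then show ?thesis using m j len by (simp add: not_less_eq)
  qed
  ultimately have ab: "a \<noteq> b" by auto
  show ?thesis
  proof (rule that[OF eab(1)])
    show "0 < a + sgn (b - a) * (m - \<tau>)" "a + sgn (b - a) * (m - \<tau>) < elen G e"
      using seg_coord_strictly_inside[OF eab(2,3), of "m - \<tau>"] \<open>\<tau> < m\<close> \<open>m < \<tau> + \<bar>b - a\<bar>\<close> by auto
    show "\<bar>sgn (b - a)\<bar> = 1" using ab by (simp add: abs_sgn_eq)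
    show "min (m - \<tau>) (\<tau> + \<bar>b - a\<bar> - m) > 0" using \<open>\<tau> < m\<close> \<open>m < \<tau> + \<bar>b - a\<bar>\<close> by simp
    fix s assume "\<bar>s - m\<bar> < min (m - \<tau>) (\<tau> + \<bar>b - a\<bar> - m)"
    then have s: "\<tau> \<le> s" "s \<le> path_len (take (Suc j) Q)" using len by auto
    then show "s \<in> {0..path_len Q} \<and>
        path_point G x Q s = gpos G e (a + sgn (b - a) * (m - \<tau>) + sgn (b - a) * (s - m))"
      using path_point_on_seg[OF Q j(1) Qj] path_len_nonneg[of "take j Q"] path_len_take_le[of "Suc j" Q]
      unfolding \<tau>_def by (auto simp: algebra_simps)
  qed
qed

lemma path_point_across_straight_junction:
  assumes Q: "edge_path G x Q y" and pos: "\<forall>sg\<in>set Q. seg_len sg > 0" and i: "Suc i < length Q"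
    and Qi: "Q ! i = (e, a1, b1)" and QSi: "Q ! Suc i = (e, a2, b2)" and straight: "sgn (b1 - a1) = sgn (b2 - a2)"
    and m: "m = path_len (take (Suc i) Q)"
  obtains c0 \<sigma> r where "0 < c0" "c0 < elen G e" "\<bar>\<sigma>\<bar> = 1" "r > 0"
    "\<And>s. \<bar>s - m\<bar> < r \<Longrightarrow> s \<in> {0..path_len Q} \<and> path_point G x Q s = gpos G e (c0 + \<sigma> * (s - m))"
proof -
  have i': "i < length Q" using i by simp
  have eab1: "e \<in> medges G" "a1 \<in> {0..elen G e}" "b1 \<in> {0..elen G e}" using edge_path_nth[OF Q i' Qi] by auto
  have eab2: "a2 \<in> {0..elen G e}" "b2 \<in> {0..elen G e}" using edge_path_nth[OF Q i QSi] by auto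
  have "b1 = a2" using gpos_inj[OF eab1(1) edge_path_junction[OF Q i Qi QSi]] .
  have l: "\<bar>b1 - a1\<bar> > 0" "\<bar>b2 - a2\<bar> > 0" using pos i Qi QSi by (metis nth_mem seg_len.simps Suc_lessD)+
  define \<tau> where "\<tau> = path_len (take i Q)"
  define \<sigma> where "\<sigma> = sgn (b1 - a1)"
  have m1: "m = \<tau> + \<bar>b1 - a1\<bar>" using path_len_take_Suc[OF i'] Qi unfolding m \<tau>_def by simp
  have m2: "path_len (take (Suc (Suc i)) Q) = m + \<bar>b2 - a2\<bar>" using path_len_take_Suc[OF i] QSi unfolding m by simp
  have "(a1 < b1 \<and> a2 < b2) \<or> (b1 < a1 \<and> b2 < a2)" using straight l by (auto simp: sgn_if split: if_splits)
  then have b1: "0 < b1" "b1 < elen G e" using eab1 eab2 \<open>b1 = a2\<close> by auto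
  show ?thesis
  proof (rule that[OF b1])
    show "\<bar>\<sigma>\<bar> = 1" using l unfolding \<sigma>_def by (simp add: abs_sgn_eq)
    show "min \<bar>b1 - a1\<bar> \<bar>b2 - a2\<bar> > 0" using l by simp
    fix s assume s: "\<bar>s - m\<bar> < min \<bar>b1 - a1\<bar> \<bar>b2 - a2\<bar>"
    then have "0 \<le> s" "s \<le> path_len Q"
      using m1 m2 path_len_nonneg[of "take i Q"] path_len_take_le[of "Suc (Suc i)" Q]
      unfolding \<tau>_def by (auto simp: abs_less_iff)
    moreover have "path_point G x Q s = gpos G e (b1 + \<sigma> * (s - m))"
    proof (cases "s \<le> m")
      case True
      then have "path_point G x Q s = gpos G e (a1 + \<sigma> * (s - \<tau>))"
        using path_point_on_seg[OF Q i' Qi] s m1 unfolding \<sigma>_def \<tau>_def m by simp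
      also have "a1 + \<sigma> * (s - \<tau>) = b1 + \<sigma> * (s - m)"
        using sgn_abs_cancel[of a1 b1] m1 unfolding \<sigma>_def by (simp add: algebra_simps)
      finally show ?thesis .
    next
      case False
      then show ?thesis
        using path_point_on_seg[OF Q i QSi, of s] s m2 \<open>b1 = a2\<close> straight unfolding \<sigma>_def m by simp
    qed
    ultimately show "s \<in> {0..path_len Q} \<and> path_point G x Q s = gpos G e (b1 + \<sigma> * (s - m))" by simp
  qed
qed

lemma viscosity_path_smooth_test:
  assumes vs: "viscosity_subsolution G u" and Q: "edge_path G x Q y" and ne: "Q \<noteq> []"
    and m: "m \<in> {0<..<path_len Q} - junction_times Q"
    and touch: "touches_above (\<lambda>s. u (path_point G x Q s)) {0..path_len Q} m (\<lambda>s. a + b * s + c * s\<^sup>2)"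
  shows "c \<ge> 0"
proof -
  obtain e c0 \<sigma> r where e: "e \<in> medges G" "0 < c0" "c0 < elen G e" "\<bar>\<sigma>\<bar> = 1" "r > 0"
    and param: "\<And>s. \<bar>s - m\<bar> < r \<Longrightarrow> s \<in> {0..path_len Q} \<and> path_point G x Q s = gpos G e (c0 + \<sigma> * (s - m))"
    using path_point_inside_segment[OF Q ne m] by blast
  show ?thesis
    by (rule viscosity_touch_along_edge[OF vs e _ touch]) (use param in auto)
qed

lemma viscosity_path_straight_junction_test:
  assumes vs: "viscosity_subsolution G u" and Q: "edge_path G x Q y" and pos: "\<forall>sg\<in>set Q. seg_len sg > 0"
    and i: "Suc i < length Q" and Qi: "Q ! i = (e, a1, b1)" and QSi: "Q ! Suc i = (e, a2, b2)"
    and straight: "sgn (b1 - a1) = sgn (b2 - a2)" and m: "m = path_len (take (Suc i) Q)" and \<eta>: "\<eta> > 0"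
    and touch: "touches_above (\<lambda>s. u (path_point G x Q s)) {0..path_len Q} m
      (\<lambda>s. a + b * s + c * s\<^sup>2 - \<eta> * \<bar>s - m\<bar>)"
  shows False
proof -
  obtain c0 \<sigma> r where c0: "0 < c0" "c0 < elen G e" "\<bar>\<sigma>\<bar> = 1" "r > 0"
    and param: "\<And>s. \<bar>s - m\<bar> < r \<Longrightarrow> s \<in> {0..path_len Q} \<and> path_point G x Q s = gpos G e (c0 + \<sigma> * (s - m))"
    using path_point_across_straight_junction[OF Q pos i Qi QSi straight m] by blast
  have e: "e \<in> medges G" using edge_path_nth[OF Q _ Qi] i by simp
  define K where "K = \<bar>c\<bar> + 1"
  \<comment> \<open>near \<open>m\<close> the kink \<open>- \<eta> \<bar>s - m\<bar>\<close> lies below the concave parabola \<open>- K (s - m)\<^sup>2\<close>\<close>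
  have touch': "touches_above (\<lambda>s. u (path_point G x Q s)) {0..path_len Q} m
      (\<lambda>s. (a - K * m\<^sup>2) + (b + 2 * K * m) * s + (c - K) * s\<^sup>2)"
  proof (rule touches_above_le_near[OF touch, of "\<eta> / K"])
    show "\<eta> / K > 0" using \<eta> unfolding K_def by simp
    fix s assume "\<bar>s - m\<bar> < \<eta> / K"
    then have "K * \<bar>s - m\<bar> * \<bar>s - m\<bar> \<le> \<eta> * \<bar>s - m\<bar>"
      unfolding K_def by (intro mult_right_mono) (simp_all add: field_simps)
    then show "a + b * s + c * s\<^sup>2 - \<eta> * \<bar>s - m\<bar> \<le> (a - K * m\<^sup>2) + (b + 2 * K * m) * s + (c - K) * s\<^sup>2"
      by (simp add: power2_eq_square algebra_simps abs_mult_self_eq)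
  qed (simp add: power2_eq_square algebra_simps)
  have "c - K \<ge> 0"
    by (rule viscosity_touch_along_edge[OF vs e c0 _ touch']) (use param in auto)
  then show False unfolding K_def by simp
qed

lemma gdist_vertex_on_edge:
  assumes e: "e \<in> medges G" and v: "v = esrc G e \<or> v = etgt G e" and s: "s \<in> {0..elen G e}"
  shows "gdist G (GV v) (gpos G e s) = coord_from G e v s"
  using gdist_on_edge[OF e coord_from_in[of 0 e v] s] gpos_coord_from_0[OF e v] elen_pos[OF e] s
  by (auto simp: coord_from_def)

lemma inc_edges_meet_only_at:
  assumes e1: "e1 \<in> inc_edges G v" and e2: "e2 \<in> inc_edges G v" and "e1 \<noteq> e2"
    and meet: "gpos G e1 s = gpos G e2 t"
  shows "gpos G e2 t = GV v"
proof -
  obtain w where w: "gpos G e1 s = GV w" using gpos_eq_other_edge[OF \<open>e1 \<noteq> e2\<close> meet] by blast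
  have E: "e1 \<in> medges G" "e2 \<in> medges G" using e1 e2 unfolding inc_edges_def by auto
  have "w = esrc G e1 \<or> w = etgt G e1" "w = esrc G e2 \<or> w = etgt G e2"
    using gpos_eq_GV[OF E(1) w] gpos_eq_GV[OF E(2)] w meet by auto
  moreover have "v = esrc G e1 \<or> v = etgt G e1" "v = esrc G e2 \<or> v = etgt G e2"
    using e1 e2 unfolding inc_edges_def by auto
  ultimately have "w = v"
    using edge_eq_if_same_ends[OF E] src_ne_tgt[OF E(1)] src_ne_tgt[OF E(2)] \<open>e1 \<noteq> e2\<close> by fastforce
  then show ?thesis using w meet by simp
qed

lemma path_point_near_vertex_junction:
  assumes Q: "edge_path G x Q y" and pos: "\<forall>sg\<in>set Q. seg_len sg > 0" and i: "Suc i < length Q"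
    and Qi: "Q ! i = (e1, a1, b1)" and QSi: "Q ! Suc i = (e2, a2, b2)" and "e1 \<noteq> e2"
    and m: "m = path_len (take (Suc i) Q)"
  obtains v where "v \<in> mverts G" "e1 \<in> inc_edges G v" "e2 \<in> inc_edges G v"
    "\<And>d. 0 \<le> d \<Longrightarrow> d \<le> \<bar>b1 - a1\<bar> \<Longrightarrow>
      m - d \<in> {0..path_len Q} \<and> path_point G x Q (m - d) = gpos G e1 (coord_from G e1 v d)"
    "\<And>d. 0 \<le> d \<Longrightarrow> d \<le> \<bar>b2 - a2\<bar> \<Longrightarrow>
      m + d \<in> {0..path_len Q} \<and> path_point G x Q (m + d) = gpos G e2 (coord_from G e2 v d)"
proof -
  have i': "i < length Q" using i by simp
  have eab1: "e1 \<in> medges G" "a1 \<in> {0..elen G e1}" "b1 \<in> {0..elen G e1}" using edge_path_nth[OF Q i' Qi] by auto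
  have eab2: "e2 \<in> medges G" "a2 \<in> {0..elen G e2}" "b2 \<in> {0..elen G e2}" using edge_path_nth[OF Q i QSi] by auto
  have "a1 \<noteq> b1" "a2 \<noteq> b2" using pos i Qi QSi by (metis nth_mem seg_len.simps Suc_lessD abs_0 diff_self less_irrefl)+
  have junction: "gpos G e1 b1 = gpos G e2 a2" using edge_path_junction[OF Q i Qi QSi] .
  obtain v where v: "gpos G e1 b1 = GV v" using gpos_eq_other_edge[OF \<open>e1 \<noteq> e2\<close> junction] by blast
  have v1: "v = esrc G e1 \<or> v = etgt G e1" "b1 = coord_from G e1 v 0" using gpos_eq_GV[OF eab1(1) v] by auto
  have v2: "v = esrc G e2 \<or> v = etgt G e2" "a2 = coord_from G e2 v 0"
    using gpos_eq_GV[OF eab2(1)] v junction by auto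
  define \<tau> where "\<tau> = path_len (take i Q)"
  have m1: "m = \<tau> + \<bar>b1 - a1\<bar>" using path_len_take_Suc[OF i'] Qi unfolding m \<tau>_def by simp
  have m2: "path_len (take (Suc (Suc i)) Q) = m + \<bar>b2 - a2\<bar>" using path_len_take_Suc[OF i] QSi unfolding m by simp
  have range: "\<tau> \<ge> 0" "m + \<bar>b2 - a2\<bar> \<le> path_len Q"
    using path_len_nonneg[of "take i Q"] path_len_take_le[of "Suc (Suc i)" Q] m2 unfolding \<tau>_def by auto
  show ?thesis
  proof (rule that)
    show "v \<in> mverts G" using v1(1) src_in_verts[OF eab1(1)] tgt_in_verts[OF eab1(1)] by auto
    show "e1 \<in> inc_edges G v" "e2 \<in> inc_edges G v" using v1(1) v2(1) eab1(1) eab2(1) unfolding inc_edges_def by auto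
  next
    fix d assume d: "0 \<le> d" "d \<le> \<bar>b1 - a1\<bar>"
    have "path_point G x Q (m - d) = gpos G e1 (a1 + sgn (b1 - a1) * (\<bar>b1 - a1\<bar> - d))"
      using path_point_on_seg[OF Q i' Qi, of "m - d"] d m1 m unfolding \<tau>_def by simp
    then show "m - d \<in> {0..path_len Q} \<and> path_point G x Q (m - d) = gpos G e1 (coord_from G e1 v d)"
      using seg_coord_toward_vertex[OF v1(2) eab1(2)] \<open>a1 \<noteq> b1\<close> d m1 range by auto
  next
    fix d assume d: "0 \<le> d" "d \<le> \<bar>b2 - a2\<bar>"
    have "path_point G x Q (m + d) = gpos G e2 (a2 + sgn (b2 - a2) * d)"
      using path_point_on_seg[OF Q i QSi, of "m + d"] d m2 m by simp
    then show "m + d \<in> {0..path_len Q} \<and> path_point G x Q (m + d) = gpos G e2 (coord_from G e2 v d)"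
      using seg_coord_from_vertex[OF v2(2) eab2(3)] \<open>a2 \<noteq> b2\<close> d m1 range by auto
  qed
qed

lemma viscosity_vertex_test:
  assumes vs: "viscosity_subsolution G u" and v: "v \<in> mverts G"
    and e1: "e1 \<in> inc_edges G v" and e2: "e2 \<in> inc_edges G v" and "e1 \<noteq> e2"
    and q1: "\<And>d. (q1 has_real_derivative q1' d) (at d)" "continuous_on UNIV q1'"
    and q2: "\<And>d. (q2 has_real_derivative q2' d) (at d)" "continuous_on UNIV q2'"
    and at_v: "q1 0 = u (GV v)" "q2 0 = u (GV v)"
    and above1: "\<And>d. d \<in> {0..elen G e1} \<Longrightarrow> u (gpos G e1 (coord_from G e1 v d)) \<le> q1 d"
    and above2: "\<And>d. d \<in> {0..elen G e2} \<Longrightarrow> u (gpos G e2 (coord_from G e2 v d)) \<le> q2 d"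
  shows "q1' 0 + q2' 0 \<ge> 0"
proof -
  have ends: "e1 \<in> medges G" "v = esrc G e1 \<or> v = etgt G e1" "e2 \<in> medges G" "v = esrc G e2 \<or> v = etgt G e2"
    using e1 e2 unfolding inc_edges_def by auto
  define \<phi> where "\<phi> p = (if p \<in> gpos G e1 ` {0..elen G e1} then q1 (gdist G (GV v) p) else q2 (gdist G (GV v) p))"
    for p
  have \<phi>1: "\<phi> (gpos G e1 s) = q1 (coord_from G e1 v s)" if "s \<in> {0..elen G e1}" for s
    using that gdist_vertex_on_edge[OF ends(1,2)] unfolding \<phi>_def by auto
  have \<phi>2: "\<phi> (gpos G e2 s) = q2 (coord_from G e2 v s)" if s: "s \<in> {0..elen G e2}" for s
  proof (cases "gpos G e2 s \<in> gpos G e1 ` {0..elen G e1}")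
    case True
    then have at_vertex: "gpos G e2 s = GV v"
      using inc_edges_meet_only_at[OF e1 e2 \<open>e1 \<noteq> e2\<close>] by (metis imageE)
    then have "s = coord_from G e2 v 0" using gpos_eq_GV[OF ends(3)] by blast
    then have "coord_from G e2 v s = 0" by (simp add: coord_from_def)
    moreover have "gdist G (GV v) (GV v) = 0" using gdist_self v unfolding gpoints_def by auto
    ultimately show ?thesis using True at_vertex at_v unfolding \<phi>_def by simp
  qed (use s gdist_vertex_on_edge[OF ends(3,4)] \<phi>_def in auto)
  have "ingoing G e1 v (\<lambda>s. (if v = esrc G e1 then 1 else -1) * q1' (coord_from G e1 v s))
      + ingoing G e2 v (\<lambda>s. (if v = esrc G e2 then 1 else -1) * q2' (coord_from G e2 v s)) \<ge> 0"
  proof (rule viscosity_subsolutionD_vertex[OF vs v _ e1 e2 \<open>e1 \<noteq> e2\<close>])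
    have "card {e1, e2} \<le> card (inc_edges G v)"
      using e1 e2 finite_edges by (intro card_mono) (auto simp: inc_edges_def)
    then show "card (inc_edges G v) > 1" using \<open>e1 \<noteq> e2\<close> by simp
    show "C1_closed (elen G e1) (\<lambda>s. \<phi> (gpos G e1 s)) (\<lambda>s. (if v = esrc G e1 then 1 else -1) * q1' (coord_from G e1 v s))"
      by (rule C1_closed_coord_from[OF q1 \<phi>1])
    show "C1_closed (elen G e2) (\<lambda>s. \<phi> (gpos G e2 s)) (\<lambda>s. (if v = esrc G e2 then 1 else -1) * q2' (coord_from G e2 v s))"
      by (rule C1_closed_coord_from[OF q2 \<phi>2])
    show "\<phi> (GV v) = u (GV v)"
      using \<phi>1[of "coord_from G e1 v 0"] gpos_coord_from_0[OF ends(1,2)] coord_from_in[of 0 e1 v]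
        elen_pos[OF ends(1)] at_v by simp
    show "\<forall>s\<in>{0..elen G e1}. u (gpos G e1 s) \<le> \<phi> (gpos G e1 s)"
      using above1[OF coord_from_in[of _ e1 v]] \<phi>1 by simp
    show "\<forall>s\<in>{0..elen G e2}. u (gpos G e2 s) \<le> \<phi> (gpos G e2 s)"
      using above2[OF coord_from_in[of _ e2 v]] \<phi>2 by simp
  qed
  then show ?thesis
    using ingoing_coord_from[OF src_ne_tgt[OF ends(1)] ends(2), of q1']
      ingoing_coord_from[OF src_ne_tgt[OF ends(3)] ends(4), of q2'] by simp
qed

lemma usc_bounded_on_edge:
  assumes usc: "mg_usc G u" and e: "e \<in> medges G"
  obtains B where "\<And>s. s \<in> {0..elen G e} \<Longrightarrow> u (gpos G e s) \<le> B"
proof -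
  have "usc_on {0..elen G e} (\<lambda>s. u (gpos G e s))"
    unfolding usc_on_def
  proof (intro ballI allI impI)
    fix s and \<epsilon> :: real assume s: "s \<in> {0..elen G e}" and \<epsilon>: "\<epsilon> > 0"
    obtain \<delta> where "\<delta> > 0" "\<forall>y\<in>gpoints G. gdist G (gpos G e s) y < \<delta> \<longrightarrow> u y < u (gpos G e s) + \<epsilon>"
      using usc gpos_in_gpoints[OF e s] \<epsilon> unfolding mg_usc_def by blast
    then show "\<exists>\<delta>>0. \<forall>t\<in>{0..elen G e}. dist t s < \<delta> \<longrightarrow> u (gpos G e t) < u (gpos G e s) + \<epsilon>"
      using gdist_on_edge[OF e s] gpos_in_gpoints[OF e] by (auto simp: dist_real_def abs_minus_commute)
  qed
  then obtain m where "\<And>s. s \<in> {0..elen G e} \<Longrightarrow> u (gpos G e s) \<le> u (gpos G e m)"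
    using usc_on_attains_max[of "{0..elen G e}"] elen_pos[OF e] by force
  then show ?thesis using that by blast
qed

lemma viscosity_no_vertex_kink:
  assumes vs: "viscosity_subsolution G u" and v: "v \<in> mverts G"
    and e1: "e1 \<in> inc_edges G v" and e2: "e2 \<in> inc_edges G v" and "e1 \<noteq> e2"
    and \<rho>: "\<rho> > 0" and \<eta>: "\<eta> > 0" and at_v: "u (GV v) = a + b * m + c * m\<^sup>2"
    and near1: "\<And>d. 0 \<le> d \<Longrightarrow> d < \<rho> \<Longrightarrow>
      u (gpos G e1 (coord_from G e1 v d)) \<le> a + b * (m - d) + c * (m - d)\<^sup>2 - \<eta> * d"
    and near2: "\<And>d. 0 \<le> d \<Longrightarrow> d < \<rho> \<Longrightarrow>
      u (gpos G e2 (coord_from G e2 v d)) \<le> a + b * (m + d) + c * (m + d)\<^sup>2 - \<eta> * d"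
  shows False
proof -
  have E: "e1 \<in> medges G" "e2 \<in> medges G" using e1 e2 unfolding inc_edges_def by auto
  obtain B1 B2 where B: "\<And>s. s \<in> {0..elen G e1} \<Longrightarrow> u (gpos G e1 s) \<le> B1"
    "\<And>s. s \<in> {0..elen G e2} \<Longrightarrow> u (gpos G e2 s) \<le> B2"
    using usc_bounded_on_edge[OF viscosity_subsolution_usc[OF vs]] E by metis
  obtain K where K: "K > 0" "\<And>d \<sigma>. \<rho> \<le> d \<Longrightarrow> d \<le> elen G e1 + elen G e2 \<Longrightarrow> \<bar>\<sigma>\<bar> = 1 \<Longrightarrow>
      max B1 B2 \<le> a + b * (m + \<sigma> * d) + c * (m + \<sigma> * d)\<^sup>2 - \<eta> * d + K * d\<^sup>2"
    using quadratic_penalty_dominates[OF \<rho>] by blast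
  \<comment> \<open>test functions of the distance \<open>d\<close> from \<open>v\<close>, with \<open>\<sigma> = -1\<close> along \<open>e1\<close> and \<open>\<sigma> = 1\<close> along \<open>e2\<close>\<close>
  define q where "q \<sigma> d = a + b * (m + \<sigma> * d) + c * (m + \<sigma> * d)\<^sup>2 - \<eta> * d + K * d\<^sup>2" for \<sigma> d
  define q' where "q' \<sigma> d = b * \<sigma> + 2 * c * (m + \<sigma> * d) * \<sigma> - \<eta> + 2 * K * d" for \<sigma> d
  have q: "(q \<sigma> has_real_derivative q' \<sigma> d) (at d)" "continuous_on UNIV (q' \<sigma>)" for \<sigma> d
    unfolding q_def q'_def
    by (auto intro!: derivative_eq_intros continuous_intros simp: power2_eq_square algebra_simps)
  have above: "u (gpos G e (coord_from G e v d)) \<le> q \<sigma> d"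
    if \<sigma>: "\<bar>\<sigma>\<bar> = 1" and e: "e = e1 \<or> e = e2" and d: "d \<in> {0..elen G e}"
      and near: "d < \<rho> \<Longrightarrow> u (gpos G e (coord_from G e v d)) \<le> q \<sigma> d - K * d\<^sup>2"
    for \<sigma> e d
  proof (cases "d < \<rho>")
    case True
    moreover have "0 \<le> K * d\<^sup>2" using K(1) by simp
    ultimately show ?thesis using near by linarith
  next
    case False
    have "coord_from G e v d \<in> {0..elen G e}" using coord_from_in[OF d] .
    then have "u (gpos G e (coord_from G e v d)) \<le> max B1 B2" using e B by fastforce
    moreover have "d \<le> elen G e1 + elen G e2" using d e elen_pos[OF E(1)] elen_pos[OF E(2)] by auto
    then have "max B1 B2 \<le> q \<sigma> d" unfolding q_def using K(2)[OF _ _ \<sigma>] False by simp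
    ultimately show ?thesis by linarith
  qed
  have "q' (-1) 0 + q' 1 0 \<ge> 0"
  proof (rule viscosity_vertex_test[OF vs v e1 e2 \<open>e1 \<noteq> e2\<close> q q])
    show "q (-1) 0 = u (GV v)" "q 1 0 = u (GV v)" using at_v unfolding q_def by simp_all
    show "u (gpos G e1 (coord_from G e1 v d)) \<le> q (-1) d" if "d \<in> {0..elen G e1}" for d
      by (rule above) (use that near1[of d] in \<open>auto simp: q_def\<close>)
    show "u (gpos G e2 (coord_from G e2 v d)) \<le> q 1 d" if "d \<in> {0..elen G e2}" for d
      by (rule above) (use that near2[of d] in \<open>auto simp: q_def\<close>)
  qed
  then show False using \<eta> unfolding q'_def by simp
qed

lemma viscosity_path_vertex_junction_test:
  assumes vs: "viscosity_subsolution G u" and Q: "edge_path G x Q y" and pos: "\<forall>sg\<in>set Q. seg_len sg > 0"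
    and i: "Suc i < length Q" and Qi: "Q ! i = (e1, a1, b1)" and QSi: "Q ! Suc i = (e2, a2, b2)"
    and "e1 \<noteq> e2" and m: "m = path_len (take (Suc i) Q)" and \<eta>: "\<eta> > 0"
    and touch: "touches_above (\<lambda>s. u (path_point G x Q s)) {0..path_len Q} m
      (\<lambda>s. a + b * s + c * s\<^sup>2 - \<eta> * \<bar>s - m\<bar>)"
  shows False
proof -
  obtain v where v: "v \<in> mverts G" "e1 \<in> inc_edges G v" "e2 \<in> inc_edges G v"
    and left: "\<And>d. 0 \<le> d \<Longrightarrow> d \<le> \<bar>b1 - a1\<bar> \<Longrightarrow>
      m - d \<in> {0..path_len Q} \<and> path_point G x Q (m - d) = gpos G e1 (coord_from G e1 v d)"
    and right: "\<And>d. 0 \<le> d \<Longrightarrow> d \<le> \<bar>b2 - a2\<bar> \<Longrightarrow>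
      m + d \<in> {0..path_len Q} \<and> path_point G x Q (m + d) = gpos G e2 (coord_from G e2 v d)"
    using path_point_near_vertex_junction[OF Q pos i Qi QSi \<open>e1 \<noteq> e2\<close> m] by blast
  obtain r where r: "r > 0" "\<And>s. s \<in> {0..path_len Q} \<Longrightarrow> \<bar>s - m\<bar> < r \<Longrightarrow>
      u (path_point G x Q s) \<le> a + b * s + c * s\<^sup>2 - \<eta> * \<bar>s - m\<bar>"
    and at_m: "u (path_point G x Q m) = a + b * m + c * m\<^sup>2"
    using touch unfolding touches_above_def by auto
  define \<rho> where "\<rho> = min r (min \<bar>b1 - a1\<bar> \<bar>b2 - a2\<bar>)"
  have "\<bar>b1 - a1\<bar> > 0" "\<bar>b2 - a2\<bar> > 0" using pos i Qi QSi by (metis nth_mem seg_len.simps Suc_lessD)+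
  then have "\<rho> > 0" unfolding \<rho>_def using r(1) by simp
  have "path_point G x Q m = GV v"
    using left[of 0] gpos_coord_from_0 v(2) unfolding inc_edges_def by auto
  show False
  proof (rule viscosity_no_vertex_kink[OF vs v \<open>e1 \<noteq> e2\<close> \<open>\<rho> > 0\<close> \<eta>])
    show "u (GV v) = a + b * m + c * m\<^sup>2" using at_m \<open>path_point G x Q m = GV v\<close> by simp
    show "u (gpos G e1 (coord_from G e1 v d)) \<le> a + b * (m - d) + c * (m - d)\<^sup>2 - \<eta> * d"
      if "0 \<le> d" "d < \<rho>" for d
      using left[of d] r(2)[of "m - d"] that unfolding \<rho>_def by auto
    show "u (gpos G e2 (coord_from G e2 v d)) \<le> a + b * (m + d) + c * (m + d)\<^sup>2 - \<eta> * d"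
      if "0 \<le> d" "d < \<rho>" for d
      using right[of d] r(2)[of "m + d"] that unfolding \<rho>_def by auto
  qed
qed

lemma geodesic_through:
  assumes x: "x \<in> gpoints G" and y: "y \<in> gpoints G" and z: "z \<in> gpoints G"
    and xzy: "on_min_path G x y z"
  obtains Q where "edge_path G x Q y" "path_len Q = gdist G x y" "\<forall>sg\<in>set Q. seg_len sg > 0"
    "gdist G x z \<in> {0..path_len Q}" "path_point G x Q (gdist G x z) = z"
proof -
  obtain P1 where P1: "edge_path G x P1 z" "path_len P1 = gdist G x z" using shortest_edge_path[OF x z] by blast
  obtain P2 where P2: "edge_path G z P2 y" "path_len P2 = gdist G z y" using shortest_edge_path[OF z y] by blast
  define Q1 where "Q1 = filter (\<lambda>sg. 0 < seg_len sg) P1"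
  define Q2 where "Q2 = filter (\<lambda>sg. 0 < seg_len sg) P2"
  have Q1: "edge_path G x Q1 z" "path_len Q1 = gdist G x z"
    unfolding Q1_def using edge_path_filter[OF P1(1)] P1(2) by (simp_all add: path_len_filter)
  have Q2: "edge_path G z Q2 y" "path_len Q2 = gdist G z y"
    unfolding Q2_def using edge_path_filter[OF P2(1)] P2(2) by (simp_all add: path_len_filter)
  have Q: "edge_path G x (Q1 @ Q2) y" using edge_path_append[OF Q1(1) Q2(1)] .
  have nonneg: "gdist G x z \<ge> 0" "gdist G z y \<ge> 0" using gdist_nonneg x y z by auto
  show ?thesis
  proof (rule that[OF Q])
    show "path_len (Q1 @ Q2) = gdist G x y"
      using Q1(2) Q2(2) xzy unfolding on_min_path_def path_len_append by simp
    show "\<forall>sg\<in>set (Q1 @ Q2). 0 < seg_len sg" unfolding Q1_def Q2_def by auto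
    show "gdist G x z \<in> {0..path_len (Q1 @ Q2)}"
      using nonneg Q1(2) Q2(2) unfolding path_len_append by simp
    show "path_point G x (Q1 @ Q2) (gdist G x z) = z"
      using path_point_append[OF Q] path_point_end[OF Q1(1)] Q1(2) nonneg by simp
  qed
qed

lemma viscosity_geodesic_le_chord:
  assumes vs: "viscosity_subsolution G u" and Q: "edge_path G x Q y" and x: "x \<in> gpoints G"
    and y: "y \<in> gpoints G" and min: "path_len Q = gdist G x y" and pos: "\<forall>sg\<in>set Q. seg_len sg > 0"
    and "Q \<noteq> []" and s: "s \<in> {0..path_len Q}"
  shows "u (path_point G x Q s) \<le> ((path_len Q - s) * u x + s * u y) / path_len Q"
proof -
  let ?F = "\<lambda>s. u (path_point G x Q s)"
  obtain sg Q' where "Q = sg # Q'" using \<open>Q \<noteq> []\<close> by (cases Q) auto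
  then have "path_len Q > 0"
    using pos path_len_nonneg[of Q'] by (cases sg) (auto simp: add_pos_nonneg)
  have "?F s \<le> ((path_len Q - s) * ?F 0 + s * ?F (path_len Q)) / path_len Q"
  proof (rule le_chord_of_touching_tests[where T = "junction_times Q"])
    show "finite (junction_times Q)" unfolding junction_times_def by simp
    show "c \<ge> 0" if "m \<in> {0<..<path_len Q} - junction_times Q"
      "touches_above ?F {0..path_len Q} m (\<lambda>s. a + b * s + c * s\<^sup>2)" for m a b c
      using viscosity_path_smooth_test[OF vs Q \<open>Q \<noteq> []\<close>] that by blast
    show "\<not> touches_above ?F {0..path_len Q} m (\<lambda>s. a + b * s + c * s\<^sup>2 - \<eta> * \<bar>s - m\<bar>)"
      if m: "m \<in> junction_times Q" and \<eta>: "\<eta> > 0" for m \<eta> a b c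
    proof
      assume touch: "touches_above ?F {0..path_len Q} m (\<lambda>s. a + b * s + c * s\<^sup>2 - \<eta> * \<bar>s - m\<bar>)"
      obtain j where j: "0 < j" "j < length Q" "m = path_len (take j Q)"
        using m unfolding junction_times_def by auto
      then obtain i where i: "Suc i < length Q" "m = path_len (take (Suc i) Q)"
        by (metis Suc_pred)
      obtain e1 a1 b1 e2 a2 b2 where Qi: "Q ! i = (e1, a1, b1)" and QSi: "Q ! Suc i = (e2, a2, b2)"
        by (metis prod_cases3)
      show False
      proof (cases "e1 = e2")
        case True
        then have "sgn (b1 - a1) = sgn (b2 - a2)"
          using shortest_path_no_backtrack[OF Q y min pos i(1) Qi] QSi by simp
        then show False
          using viscosity_path_straight_junction_test[OF vs Q pos i(1) Qi _ _ i(2) \<eta> touch] QSi True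
          by simp
      next
        case False
        then show False
          using viscosity_path_vertex_junction_test[OF vs Q pos i(1) Qi QSi _ i(2) \<eta> touch] by simp
      qed
    qed
    show "path_len Q > 0" by fact
    show "usc_on {0..path_len Q} ?F"
      using usc_on_path[OF viscosity_subsolution_usc[OF vs] Q x] .
    show "s \<in> {0..path_len Q}" by fact
  qed
  then show ?thesis using path_point_0[OF Q] path_point_end[OF Q] by simp
qed

lemma viscosity_imp_convex:
  assumes vs: "viscosity_subsolution G u"
  shows "mg_convex G u"
  unfolding mg_convex_def
proof (intro ballI impI)
  fix x y z assume pts: "x \<in> gpoints G" "y \<in> gpoints G" "z \<in> gpoints G"
    and xyz: "x \<noteq> y \<and> on_min_path G x y z"
  obtain Q where Q: "edge_path G x Q y" "path_len Q = gdist G x y" "\<forall>sg\<in>set Q. seg_len sg > 0"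
    "gdist G x z \<in> {0..path_len Q}" "path_point G x Q (gdist G x z) = z"
    using geodesic_through[OF pts] xyz by blast
  have "Q \<noteq> []" using Q(1) xyz by auto
  have "u z \<le> ((gdist G x y - gdist G x z) * u x + gdist G x z * u y) / gdist G x y"
    using viscosity_geodesic_le_chord[OF vs Q(1) pts(1,2) Q(2,3) \<open>Q \<noteq> []\<close> Q(4)] Q(2,5) by simp
  moreover have "gdist G x y - gdist G x z = gdist G y z"
    using xyz gdist_commute[of z y] unfolding on_min_path_def by simp
  ultimately show "u z \<le> gdist G y z / gdist G x y * u x + gdist G x z / gdist G x y * u y"
    by (simp add: add_divide_distrib)
qed

end

theorem theorem2p1:
  fixes G :: "('v, 'e) mgraph" and u :: "('v, 'e) gpoint \<Rightarrow> real"
  assumes "metric_graph G"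
  shows "mg_convex G u \<longleftrightarrow> viscosity_subsolution G u"
proof -
  interpret metric_graph_space G using assms by unfold_locales
  show ?thesis using convex_imp_viscosity_subsolution viscosity_imp_convex by blast
qed

end
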